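(* Define elements of $\mathcal H$ by $z_n=2u_n+\sum_{k=1}^{n-1}u_ku_{n-k}$ and, recursively, $w_n=\frac12u_n-\frac12\sum_{i=1}^{n-1}w_iw_{n-i}$ ($n\ge1$). Let $\Phi:(\mathcal H,\Delta_{Fr})\to(\mathcal H,\Delta)$ be the unique algebra morphism with $\Phi(u_n)=z_n$ for all $n\ge1$. Then $\Phi$ is an isomorphism of graded Hopf algebras, and its inverse is given by $\Phi^{-1}(u_n)=w_n$.
   Context: Planar rooted trees are finite trees with a root, embedded in the plane, edges oriented away from the root (undecorated). Let $\mathcal H_{P,R}$ be the free associative unital $\mathbb Q$-algebra on planar rooted trees, with basis the planar forests $t_1\cdots t_n$ ($1$ = empty forest), graded by weight (number of vertices), with coproduct $\Delta(F)=\sum_cP^c(F)\otimes R^c(F)$ over tuples $c=(c_i)$ where each $c_i$ is the empty cut of $t_i$ ($P=1,R=t_i$), the total cut ($P=t_i,R=1$), or an admissible cut of $t_i$ (a nonempty set of edges such that every oriented path meets at most one of them; $R^{c_i}(t_i)$ is the component of the root and $P^{c_i}(t_i)$ the left-to-right planar forest of the other components), $P^c(F)=\prod P^{c_i}(t_i)$, $R^c(F)=\prod R^{c_i}(t_i)$, and counit $\varepsilon(F)=0$ for $F\ne1$. On the same algebra there is a second Hopf algebra structure (the Frabetti–Brouder one) with coproduct $\Delta_{Fr}(F)=\sum_cP^c(F)\otimes R^c(F)$ where each $c_i$ is the empty cut, the total cut, or an admissible cut of $t_i$ containing no left edge (an edge is left if it is the leftmost among the edges with the same origin). For $n\ge1$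 let $u_n$ be the sum of all planar forests of weight $n$, and let $\mathcal H$ be the subalgebra generated by the $u_n$; the $u_n$ generate $\mathcal H$ freely, and $\mathcal H$ is a graded Hopf subalgebra for both $\Delta$ and $\Delta_{Fr}$. *)

theory Defs
  imports Complex_Main
begin

text \<open>A planar rooted tree is a root together with the (ordered, left to right) list of
  its subtrees; a planar forest is a list of planar rooted trees (the empty list is the
  empty forest 1).\<close>

datatype ptree = Node "ptree list"

type_synonym forest = "ptree list"

fun tw :: "ptree \<Rightarrow> nat" where
  "tw (Node ts) = Suc (sum_list (map tw ts))"

definition fw :: "forest \<Rightarrow> nat" where
  "fw F = sum_list (map tw F)"

text \<open>cuts t lists, with multiplicity, the pairs (P^c(t), R^c(t)) for all cuts c of t:
  the total cut, and all other cuts (the empty one and the admissible ones).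
  A non-total cut of Node [t1,...,tk] is given by choosing, for each child ti, either to
  cut the edge to ti (contributing the whole ti to P), or not to cut that edge and to
  choose a non-total cut of ti.\<close>

fun cuts :: "ptree \<Rightarrow> (forest \<times> forest) list" where
  "cuts (Node ts) =
     ([Node ts], []) #
     map (\<lambda>ps. (concat (map fst ps), [Node (concat (map snd ps))]))
         (product_lists (map cuts ts))"

text \<open>Frabetti--Brouder cuts: the edge to the leftmost child of a vertex (a left edge)
  may not be cut. fcuts b t: if b then the total cut of t is included.\<close>

fun fcuts :: "bool \<Rightarrow> ptree \<Rightarrow> (forest \<times> forest) list" where
  "fcuts b (Node []) = (if b then [([Node []], [])] else []) @ [([], [Node []])]"
| "fcuts b (Node (t1 # ts)) =
     (if b then [([Node (t1 # ts)], [])] else []) @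
     map (\<lambda>ps. (concat (map fst ps), [Node (concat (map snd ps))]))
         (product_lists (fcuts False t1 # map (fcuts True) ts))"

definition cutsF :: "forest \<Rightarrow> (forest \<times> forest) list" where
  "cutsF F = map (\<lambda>cs. (concat (map fst cs), concat (map snd cs))) (product_lists (map cuts F))"

definition fcutsF :: "forest \<Rightarrow> (forest \<times> forest) list" where
  "fcutsF F = map (\<lambda>cs. (concat (map fst cs), concat (map snd cs)))
                (product_lists (map (fcuts True) F))"

text \<open>Elements of H_{P,R} are (finitely supported) functions from planar forests to Q
  (coefficients in the forest basis); elements of H_{P,R} (x) H_{P,R} are functions on
  pairs of forests.\<close>

type_synonym alg = "forest \<Rightarrow> rat"
type_synonym alg2 = "forest \<times> forest \<Rightarrow> rat"

definition fsupp :: "alg \<Rightarrow> bool" where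
  "fsupp a \<longleftrightarrow> finite {F. a F \<noteq> 0}"

definition fadd :: "alg \<Rightarrow> alg \<Rightarrow> alg" where
  "fadd a b = (\<lambda>F. a F + b F)"

definition smul :: "rat \<Rightarrow> alg \<Rightarrow> alg" where
  "smul c a = (\<lambda>F. c * a F)"

definition fsum :: "(nat \<Rightarrow> alg) \<Rightarrow> nat set \<Rightarrow> alg" where
  "fsum f K = (\<lambda>F. \<Sum>k\<in>K. f k F)"

definition fmul :: "alg \<Rightarrow> alg \<Rightarrow> alg" where
  "fmul a b = (\<lambda>F. \<Sum>i\<le>length F. a (take i F) * b (drop i F))"

definition fone :: alg where
  "fone = (\<lambda>F. if F = [] then 1 else 0)"

definition counit :: "alg \<Rightarrow> rat" where
  "counit a = a []"

definition cop :: "alg \<Rightarrow> alg2" where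
  "cop a = (\<lambda>p. \<Sum>F\<in>{F. a F \<noteq> 0}. a F * of_nat (count_list (cutsF F) p))"

definition copFr :: "alg \<Rightarrow> alg2" where
  "copFr a = (\<lambda>p. \<Sum>F\<in>{F. a F \<noteq> 0}. a F * of_nat (count_list (fcutsF F) p))"

definition tens_sum :: "(alg \<times> alg) list \<Rightarrow> alg2" where
  "tens_sum ps = (\<lambda>(G, H). sum_list (map (\<lambda>(a, b). a G * b H) ps))"

definition u :: "nat \<Rightarrow> alg" where
  "u n = (\<lambda>F. if fw F = n then 1 else 0)"

inductive_set Hs :: "alg set" where
  gen: "n \<ge> 1 \<Longrightarrow> u n \<in> Hs"
| one: "fone \<in> Hs"
| add: "a \<in> Hs \<Longrightarrow> b \<in> Hs \<Longrightarrow> fadd a b \<in> Hs"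
| smul: "a \<in> Hs \<Longrightarrow> smul c a \<in> Hs"
| mul: "a \<in> Hs \<Longrightarrow> b \<in> Hs \<Longrightarrow> fmul a b \<in> Hs"

definition homogeneous :: "nat \<Rightarrow> alg \<Rightarrow> bool" where
  "homogeneous n a \<longleftrightarrow> (\<forall>F. a F \<noteq> 0 \<longrightarrow> fw F = n)"

definition alg_morph_H :: "(alg \<Rightarrow> alg) \<Rightarrow> bool" where
  "alg_morph_H \<Phi> \<longleftrightarrow>
     (\<forall>x\<in>Hs. \<Phi> x \<in> Hs) \<and>
     (\<forall>x\<in>Hs. \<forall>y\<in>Hs. \<Phi> (fadd x y) = fadd (\<Phi> x) (\<Phi> y)) \<and>
     (\<forall>x\<in>Hs. \<forall>c. \<Phi> (smul c x) = smul c (\<Phi> x)) \<and>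
     (\<forall>x\<in>Hs. \<forall>y\<in>Hs. \<Phi> (fmul x y) = fmul (\<Phi> x) (\<Phi> y)) \<and>
     \<Phi> fone = fone"

definition z :: "nat \<Rightarrow> alg" where
  "z n = fadd (smul 2 (u n)) (fsum (\<lambda>k. fmul (u k) (u (n - k))) {1..n-1})"

function w :: "nat \<Rightarrow> alg" where
  "w n = (\<lambda>F. (1/2) * u n F - (1/2) * (\<Sum>i\<in>{1..<n}. fmul (w i) (w (n - i)) F))"
  by auto
termination
  by (relation "measure id") auto

end

(*
  Let binom_forests a s be the element whose coefficient on a forest G of weight s is
  C(|G| + a, |G|), so that u_s and z_s are the cases a = 0 and a = 1. The upper negated
  Vandermonde identity gives binom_forests (a + b + 1) s = sum_i binom_forests a i *
  binom_forests b (s - i); hence every algebra morphism Phi with Phi u_n = z_n sends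
  binom_forests a s to binom_forests (2a + 1) s.

  Splitting off the first tree of the trunk gives a recursion for the number of cuts with
  pruned part G and trunk H, over all forests of weight fw G + fw H; its solutions are
  C(|G| + 2 fw H, |G|) for Delta and C(|G| + fw H, |G|) for Delta_Fr. Therefore
  Delta_Fr u_n = sum_k binom_forests k (n - k) (x) u_k and
  Delta z_n = sum_k binom_forests (2k + 1) (n - k) (x) z_k = (Phi (x) Phi) (Delta_Fr u_n),
  and since both coproducts are multiplicative, Phi intertwines them on all of H.

  The morphism Psi with Psi u_n = w_n satisfies Psi z_n = u_n by the recursion defining w_n,
  and Phi w_n = u_n by induction on n, so Phi and Psi are inverse to each other on H.
  Such morphisms exist because H_{P,R} is free on the trees: any images of the trees
  extend to an algebra morphism.
*)

theory Submission
  imports Defs "HOL-Computational_Algebra.Formal_Power_Series"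
begin

lemma fw_Nil [simp]: "fw [] = 0"
  by (simp add: fw_def)

lemma fw_Cons [simp]: "fw (t # F) = tw t + fw F"
  by (simp add: fw_def)

lemma fw_append [simp]: "fw (F @ G) = fw F + fw G"
  by (simp add: fw_def)

lemma tw_Node [simp]: "tw (Node ts) = Suc (fw ts)"
  by (simp add: fw_def)

declare tw.simps [simp del]

lemma tw_pos: "0 < tw t"
  by (cases t) simp

lemma fw_eq_0_iff [simp]: "fw F = 0 \<longleftrightarrow> F = []"
  by (cases F) (auto simp: tw_pos)

lemma fw_take_drop: "fw (take i F) + fw (drop i F) = fw F"
  by (metis append_take_drop_id fw_append)

fun children :: "ptree \<Rightarrow> forest" where
  "children (Node ts) = ts"

definition forests_of_weight :: "nat \<Rightarrow> forest set" where
  "forests_of_weight n = {F. fw F = n}"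

lemma finite_forests_weight_le: "finite {F. fw F \<le> n}"
proof (induction n)
  case 0
  then show ?case by simp
next
  case (Suc n)
  let ?A = "{F. fw F \<le> n}"
  have "{F. fw F \<le> Suc n} \<subseteq> insert [] ((\<lambda>(ts, F). Node ts # F) ` (?A \<times> ?A))"
  proof
    fix F assume F: "F \<in> {F. fw F \<le> Suc n}"
    show "F \<in> insert [] ((\<lambda>(ts, F). Node ts # F) ` (?A \<times> ?A))"
    proof (cases F)
      case (Cons t F')
      obtain ts where "t = Node ts" by (cases t)
      with Cons F show ?thesis
        by (auto intro!: image_eqI[where x="(ts, F')"])
    qed simp
  qed
  then show ?case
    using Suc by (meson finite_SigmaI finite_imageI finite_insert finite_subset)
qed

lemma finite_forests_of_weight [simp]: "finite (forests_of_weight n)"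
  by (rule finite_subset[OF _ finite_forests_weight_le[of n]]) (auto simp: forests_of_weight_def)

lemma forests_of_weight_nonempty: "forests_of_weight n \<noteq> {}"
proof -
  have "fw (replicate n (Node [])) = n"
    by (induction n) auto
  then show ?thesis
    by (auto simp: forests_of_weight_def)
qed

lemma sum_forests_of_weight_single_tree:
  "(\<Sum>F\<in>forests_of_weight n. if length F = 1 then f F else 0)
     = (if n = 0 then 0 else \<Sum>ts\<in>forests_of_weight (n - 1). f [Node ts])"
proof (cases n)
  case (Suc m)
  have "{F \<in> forests_of_weight n. length F = 1} = (\<lambda>ts. [Node ts]) ` forests_of_weight m"
  proof (rule set_eqI, rule iffI)
    fix F assume "F \<in> {F \<in> forests_of_weight n. length F = 1}"
    then obtain t where "F = [t]" "tw t = n"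
      by (auto simp: forests_of_weight_def length_Suc_conv)
    then show "F \<in> (\<lambda>ts. [Node ts]) ` forests_of_weight m"
      using Suc by (cases t) (auto simp: forests_of_weight_def)
  qed (auto simp: forests_of_weight_def Suc)
  moreover have "inj_on (\<lambda>ts. [Node ts]) (forests_of_weight m)"
    by (auto simp: inj_on_def)
  ultimately show ?thesis
    using Suc by (simp add: sum.inter_filter[symmetric] sum.reindex)
qed (simp add: forests_of_weight_def)

lemma sum_forests_of_weight_single_Node:
  "(\<Sum>ts\<in>forests_of_weight (fw G - 1). if G = [Node ts] then 1 else 0 :: rat)
     = (if length G = 1 then 1 else 0)"
proof (cases "length G = 1")
  case True
  then obtain r where G: "G = [Node r]"
    by (metis One_nat_def children.cases length_0_conv length_Suc_conv)
  then have "(\<Sum>ts\<in>forests_of_weight (fw G - 1). if G = [Node ts] then 1 else 0 :: rat)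
      = (\<Sum>ts\<in>forests_of_weight (fw r). if ts = r then 1 else 0)"
    by (intro sum.cong) auto
  also have "\<dots> = 1"
    by (simp add: sum.delta) (simp add: forests_of_weight_def)
  finally show ?thesis
    using True by simp
qed (auto intro!: sum.neutral)

lemma sum_forests_of_weight_head:
  assumes "tw t \<le> n"
  shows "(\<Sum>F\<in>forests_of_weight n. if F \<noteq> [] \<and> hd F = t then f (tl F) else 0)
           = (\<Sum>F\<in>forests_of_weight (n - tw t). f F)"
proof -
  have "{F \<in> forests_of_weight n. F \<noteq> [] \<and> hd F = t} = Cons t ` forests_of_weight (n - tw t)"
  proof (rule set_eqI, rule iffI)
    fix F assume "F \<in> {F \<in> forests_of_weight n. F \<noteq> [] \<and> hd F = t}"
    then show "F \<in> Cons t ` forests_of_weight (n - tw t)"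
      by (cases F) (auto simp: forests_of_weight_def)
  qed (use assms in \<open>auto simp: forests_of_weight_def\<close>)
  then show ?thesis
    by (simp add: sum.inter_filter[symmetric] sum.reindex)
qed

lemma sum_forests_of_weight_splits:
  "(\<Sum>F\<in>forests_of_weight n. \<Sum>i\<le>length F. h (take i F) (drop i F))
     = (\<Sum>(F1, F2)\<in>{(F1, F2). fw F1 + fw F2 = n}. h F1 F2)"
proof -
  have "(\<Sum>F\<in>forests_of_weight n. \<Sum>i\<le>length F. h (take i F) (drop i F))
      = (\<Sum>(F, i)\<in>Sigma (forests_of_weight n) (\<lambda>F. {..length F}). h (take i F) (drop i F))"
    by (rule sum.Sigma) auto
  also have "\<dots> = (\<Sum>(F1, F2)\<in>{(F1, F2). fw F1 + fw F2 = n}. h F1 F2)"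
    by (rule sum.reindex_bij_witness[where i="\<lambda>(F1, F2). (F1 @ F2, length F1)"
          and j="\<lambda>(F, i). (take i F, drop i F)"])
       (auto simp: forests_of_weight_def fw_take_drop)
  finally show ?thesis .
qed

lemma fmul_assoc: "fmul (fmul a b) c = fmul a (fmul b c)"
proof
  fix F :: forest
  let ?n = "length F"
  let ?g = "\<lambda>i j. a (take i F) * b (take j (drop i F)) * c (drop (i + j) F)"
  have "fmul a (fmul b c) F = (\<Sum>i\<le>?n. \<Sum>j\<le>?n - i. ?g i j)"
    by (simp add: fmul_def sum_distrib_left mult.assoc add.commute)
  also have "\<dots> = (\<Sum>(i, j)\<in>{(i, j). i + j \<le> ?n}. ?g i j)"
  proof -
    have "{(i, j). i + j \<le> ?n} = Sigma {..?n} (\<lambda>i. {..?n - i})"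
      by auto
    then show ?thesis
      by (simp add: sum.Sigma)
  qed
  also have "\<dots> = (\<Sum>k\<le>?n. \<Sum>i\<le>k. ?g i (k - i))"
    by (rule sum.triangle_reindex_eq)
  also have "\<dots> = fmul (fmul a b) c F"
    unfolding fmul_def sum_distrib_right
  proof (rule sum.cong[OF refl])
    fix k assume "k \<in> {..?n}"
    then have "length (take k F) = k"
      by auto
    then show "(\<Sum>i\<le>k. ?g i (k - i)) = (\<Sum>i\<le>length (take k F).
        a (take i (take k F)) * b (drop i (take k F)) * c (drop k F))"
      by (simp add: take_drop min_def)
  qed
  finally show "fmul (fmul a b) c F = fmul a (fmul b c) F"
    by simp
qed

lemma fmul_fone_left [simp]: "fmul fone a = a"
proof
  fix F
  have "fmul fone a F = (\<Sum>i\<le>length F. if i = 0 then a (drop i F) else 0)"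
    unfolding fmul_def fone_def by (rule sum.cong) auto
  then show "fmul fone a F = a F"
    by simp
qed

lemma fmul_fone_right [simp]: "fmul a fone = a"
proof
  fix F
  have "fmul a fone F = (\<Sum>i\<le>length F. if i = length F then a (take i F) else 0)"
    unfolding fmul_def fone_def by (rule sum.cong) auto
  then show "fmul a fone F = a F"
    by simp
qed

lemma fmul_single_trees:
  assumes "\<And>F. length F \<noteq> 1 \<Longrightarrow> a F = 0"
  shows "fmul a c F = (case F of [] \<Rightarrow> 0 | t # F' \<Rightarrow> a [t] * c F')"
proof (cases F)
  case (Cons t F')
  have "fmul a c F = (\<Sum>i\<le>length F. if i = 1 then a [t] * c F' else 0)"
    unfolding fmul_def using assms by (intro sum.cong) (auto simp: Cons take_Suc)
  then show ?thesis
    by (simp only: sum.delta[OF finite_atMost]) (simp add: Cons)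
qed (simp add: fmul_def assms)

lemma fsum_empty: "fsum f {} = smul 0 fone" \<comment> \<open>zero, in the form generated by \<open>Hs\<close>\<close>
  by (simp add: fsum_def smul_def fun_eq_iff)

lemma fsum_insert: "finite K \<Longrightarrow> k \<notin> K \<Longrightarrow> fsum f (insert k K) = fadd (f k) (fsum f K)"
  by (simp add: fsum_def fadd_def fun_eq_iff)

lemma fsum_cong [fundef_cong]: "K = L \<Longrightarrow> (\<And>k. k \<in> L \<Longrightarrow> f k = g k) \<Longrightarrow> fsum f K = fsum g L"
  by (simp add: fsum_def fun_eq_iff)

lemma u_0: "u 0 = fone"
  by (simp add: u_def fone_def fun_eq_iff)

lemma Hs_u: "u n \<in> Hs"
  by (cases n) (auto simp: u_0 intro: Hs.intros)

lemma Hs_fsum: "finite K \<Longrightarrow> (\<And>k. k \<in> K \<Longrightarrow> f k \<in> Hs) \<Longrightarrow> fsum f K \<in> Hs"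
  by (induction K rule: finite_induct) (simp_all add: fsum_empty fsum_insert Hs.intros)

lemma fsupp_Hs: "x \<in> Hs \<Longrightarrow> fsupp x"
proof (induction rule: Hs.induct)
  case (gen n)
  show ?case unfolding fsupp_def
    by (rule finite_subset[OF _ finite_forests_of_weight[of n]])
       (auto simp: u_def forests_of_weight_def split: if_splits)
next
  case one
  show ?case unfolding fsupp_def
    by (rule finite_subset[of _ "{[]}"]) (auto simp: fone_def split: if_splits)
next
  case (add a b)
  have "{F. fadd a b F \<noteq> 0} \<subseteq> {F. a F \<noteq> 0} \<union> {F. b F \<noteq> 0}"
    by (auto simp: fadd_def)
  then show ?case
    using add unfolding fsupp_def by (meson finite_UnI finite_subset)
next
  case (smul a c)
  have "{F. smul c a F \<noteq> 0} \<subseteq> {F. a F \<noteq> 0}"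
    by (auto simp: smul_def)
  then show ?case
    using smul unfolding fsupp_def by (meson finite_subset)
next
  case (mul a b)
  have "{F. fmul a b F \<noteq> 0} \<subseteq> (\<lambda>(x, y). x @ y) ` ({F. a F \<noteq> 0} \<times> {F. b F \<noteq> 0})"
  proof
    fix F assume "F \<in> {F. fmul a b F \<noteq> 0}"
    then obtain i where "a (take i F) * b (drop i F) \<noteq> 0"
      by (auto simp: fmul_def elim!: sum.not_neutral_contains_not_neutral)
    then show "F \<in> (\<lambda>(x, y). x @ y) ` ({F. a F \<noteq> 0} \<times> {F. b F \<noteq> 0})"
      by (intro image_eqI[where x="(take i F, drop i F)"]) auto
  qed
  then show ?case
    using mul unfolding fsupp_def by (meson finite_SigmaI finite_imageI finite_subset)
qed

lemma homogeneous_fone: "homogeneous 0 fone"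
  by (simp add: homogeneous_def fone_def)

lemma homogeneous_u: "homogeneous n (u n)"
  by (simp add: homogeneous_def u_def)

lemma homogeneous_fadd: "homogeneous n a \<Longrightarrow> homogeneous n b \<Longrightarrow> homogeneous n (fadd a b)"
  by (simp add: homogeneous_def fadd_def) (metis add.right_neutral)

lemma homogeneous_smul: "homogeneous n a \<Longrightarrow> homogeneous n (smul c a)"
  by (auto simp: homogeneous_def smul_def)

lemma homogeneous_fsum: "(\<And>k. k \<in> K \<Longrightarrow> homogeneous n (f k)) \<Longrightarrow> homogeneous n (fsum f K)"
  by (auto simp: homogeneous_def fsum_def elim!: sum.not_neutral_contains_not_neutral)

lemma homogeneous_fmul:
  assumes "homogeneous n a" "homogeneous m b"
  shows "homogeneous (n + m) (fmul a b)"
  unfolding homogeneous_def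
proof (intro allI impI)
  fix F assume "fmul a b F \<noteq> 0"
  then obtain i where "a (take i F) * b (drop i F) \<noteq> 0"
    by (auto simp: fmul_def elim!: sum.not_neutral_contains_not_neutral)
  with assms have "fw (take i F) = n" "fw (drop i F) = m"
    by (auto simp: homogeneous_def)
  then show "fw F = n + m"
    by (metis fw_take_drop)
qed

text \<open>The linear map \<open>a \<mapsto> \<Sum>\<^sub>F a\<^sub>F \<kappa>\<^sub>F\<close> for a kernel with \<open>\<kappa> F y = 0\<close> unless
  \<open>fw F = wt y\<close>; summing only over forests of weight \<open>wt y\<close> keeps the sum finite
  for every \<open>a\<close>, finitely supported or not.\<close>

definition kernel_map :: "('y \<Rightarrow> nat) \<Rightarrow> (forest \<Rightarrow> 'y \<Rightarrow> rat) \<Rightarrow> alg \<Rightarrow> 'y \<Rightarrow> rat" where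
  "kernel_map wt \<kappa> a y = (\<Sum>F\<in>forests_of_weight (wt y). a F * \<kappa> F y)"

lemma kernel_map_fmul:
  fixes \<kappa> :: "forest \<Rightarrow> 'y \<Rightarrow> rat"
  assumes weight: "\<And>F y. \<kappa> F y \<noteq> 0 \<Longrightarrow> fw F = wt y"
    and split: "\<And>F1 F2. \<kappa> (F1 @ F2) y = (\<Sum>j\<in>J. \<kappa> F1 (l j) * \<kappa> F2 (r j))"
    and finite: "finite J"
    and split_weight: "\<And>j. j \<in> J \<Longrightarrow> wt (l j) + wt (r j) = wt y"
  shows "kernel_map wt \<kappa> (fmul a b) y = (\<Sum>j\<in>J. kernel_map wt \<kappa> a (l j) * kernel_map wt \<kappa> b (r j))"
proof -
  let ?h = "\<lambda>F1 F2. \<Sum>j\<in>J. (a F1 * \<kappa> F1 (l j)) * (b F2 * \<kappa> F2 (r j))"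
  let ?S = "{(F1, F2). fw F1 + fw F2 = wt y}"
  have "a (take i F) * b (drop i F) * \<kappa> F y = ?h (take i F) (drop i F)" for F i
  proof -
    have "\<kappa> F y = (\<Sum>j\<in>J. \<kappa> (take i F) (l j) * \<kappa> (drop i F) (r j))"
      using split[of "take i F" "drop i F"] by simp
    then show ?thesis
      by (simp add: sum_distrib_left mult_ac)
  qed
  then have "kernel_map wt \<kappa> (fmul a b) y
      = (\<Sum>F\<in>forests_of_weight (wt y). \<Sum>i\<le>length F. ?h (take i F) (drop i F))"
    by (simp add: kernel_map_def fmul_def sum_distrib_right)
  also have "\<dots> = (\<Sum>(F1, F2)\<in>?S. ?h F1 F2)"
    by (rule sum_forests_of_weight_splits)
  also have "\<dots> = (\<Sum>j\<in>J. \<Sum>(F1, F2)\<in>?S. (a F1 * \<kappa> F1 (l j)) * (b F2 * \<kappa> F2 (r j)))"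
    unfolding case_prod_unfold by (rule sum.swap)
  also have "\<dots> = (\<Sum>j\<in>J. kernel_map wt \<kappa> a (l j) * kernel_map wt \<kappa> b (r j))"
  proof (rule sum.cong[OF refl])
    fix j assume j: "j \<in> J"
    let ?W = "forests_of_weight (wt (l j)) \<times> forests_of_weight (wt (r j))"
    have "finite ?S"
      by (rule finite_subset[of _ "{F. fw F \<le> wt y} \<times> {F. fw F \<le> wt y}"])
         (auto simp: finite_forests_weight_le)
    then have "(\<Sum>(F1, F2)\<in>?S. (a F1 * \<kappa> F1 (l j)) * (b F2 * \<kappa> F2 (r j)))
        = (\<Sum>(F1, F2)\<in>?W. (a F1 * \<kappa> F1 (l j)) * (b F2 * \<kappa> F2 (r j)))"
      using split_weight[OF j] weight
      by (intro sum.mono_neutral_right) (auto simp: forests_of_weight_def)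
    then show "(\<Sum>(F1, F2)\<in>?S. (a F1 * \<kappa> F1 (l j)) * (b F2 * \<kappa> F2 (r j)))
        = kernel_map wt \<kappa> a (l j) * kernel_map wt \<kappa> b (r j)"
      by (simp add: kernel_map_def sum_product sum.cartesian_product)
  qed
  finally show ?thesis .
qed

text \<open>\<open>lin_ext M\<close> is the linear extension of \<open>F \<mapsto> M F\<close> only when each \<open>M F\<close> is
  homogeneous of weight \<open>fw F\<close>, as required by \<open>forest_morphism\<close>.\<close>

abbreviation lin_ext :: "(forest \<Rightarrow> alg) \<Rightarrow> alg \<Rightarrow> alg" where
  "lin_ext \<equiv> kernel_map fw"

definition forest_morphism :: "(forest \<Rightarrow> alg) \<Rightarrow> bool" where
  "forest_morphism M \<longleftrightarrow>
     M [] = fone \<and> (\<forall>F G. M (F @ G) = fmul (M F) (M G)) \<and> (\<forall>F. homogeneous (fw F) (M F))"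

lemma lin_ext_fadd: "lin_ext M (fadd a b) = fadd (lin_ext M a) (lin_ext M b)"
  by (simp add: kernel_map_def fadd_def fun_eq_iff sum.distrib distrib_right)

lemma lin_ext_smul: "lin_ext M (smul c a) = smul c (lin_ext M a)"
  by (simp add: kernel_map_def smul_def fun_eq_iff sum_distrib_left mult.assoc)

lemma lin_ext_fsum: "lin_ext M (fsum f K) = fsum (\<lambda>k. lin_ext M (f k)) K"
  by (simp add: kernel_map_def fsum_def fun_eq_iff sum_distrib_right sum.swap[where A=K])

lemma lin_ext_fone:
  assumes "forest_morphism M"
  shows "lin_ext M fone = fone"
proof
  fix G
  have "lin_ext M fone G = (\<Sum>F\<in>forests_of_weight (fw G). if F = [] then M F G else 0)"
    unfolding kernel_map_def fone_def by (rule sum.cong) auto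
  also have "\<dots> = (if G = [] then M [] G else 0)"
    by (simp add: sum.delta) (simp add: forests_of_weight_def)
  also have "\<dots> = fone G"
    using assms by (simp add: forest_morphism_def fone_def)
  finally show "lin_ext M fone G = fone G" .
qed

lemma lin_ext_fmul:
  assumes "forest_morphism M"
  shows "lin_ext M (fmul a b) = fmul (lin_ext M a) (lin_ext M b)"
proof
  fix G
  show "lin_ext M (fmul a b) G = fmul (lin_ext M a) (lin_ext M b) G"
    unfolding fmul_def[of "lin_ext M a"]
    using assms
    by (intro kernel_map_fmul) (auto simp: forest_morphism_def homogeneous_def fmul_def fw_take_drop)
qed

lemma homogeneous_lin_ext:
  "homogeneous n x \<Longrightarrow> homogeneous n (lin_ext M x)"
  by (auto simp: homogeneous_def kernel_map_def forests_of_weight_def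
      elim!: sum.not_neutral_contains_not_neutral)

lemma lin_ext_counit:
  assumes "forest_morphism M"
  shows "counit (lin_ext M x) = counit x"
proof -
  have "forests_of_weight 0 = {[]}"
    by (auto simp: forests_of_weight_def)
  with assms show ?thesis
    by (simp add: counit_def kernel_map_def forest_morphism_def fone_def)
qed

lemma
  assumes "alg_morph_H \<Phi>"
  shows alg_morph_H_Hs: "x \<in> Hs \<Longrightarrow> \<Phi> x \<in> Hs"
    and alg_morph_H_fadd: "x \<in> Hs \<Longrightarrow> y \<in> Hs \<Longrightarrow> \<Phi> (fadd x y) = fadd (\<Phi> x) (\<Phi> y)"
    and alg_morph_H_smul: "x \<in> Hs \<Longrightarrow> \<Phi> (smul c x) = smul c (\<Phi> x)"
    and alg_morph_H_fmul: "x \<in> Hs \<Longrightarrow> y \<in> Hs \<Longrightarrow> \<Phi> (fmul x y) = fmul (\<Phi> x) (\<Phi> y)"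
    and alg_morph_H_fone: "\<Phi> fone = fone"
  using assms by (simp_all add: alg_morph_H_def)

lemma alg_morph_H_fsum:
  assumes "alg_morph_H \<Phi>" "finite K" "\<And>k. k \<in> K \<Longrightarrow> f k \<in> Hs"
  shows "\<Phi> (fsum f K) = fsum (\<lambda>k. \<Phi> (f k)) K"
  using assms(2,3)
proof (induction K rule: finite_induct)
  case empty
  then show ?case
    using assms(1) by (simp add: fsum_empty alg_morph_H_def Hs.one)
next
  case (insert k K)
  then show ?case
    using assms(1) by (simp add: fsum_insert alg_morph_H_def Hs_fsum)
qed

lemma alg_morph_H_eq_on_Hs:
  assumes "alg_morph_H \<Phi>" "alg_morph_H \<Psi>" "\<And>n. n \<ge> 1 \<Longrightarrow> \<Phi> (u n) = \<Psi> (u n)" "x \<in> Hs"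
  shows "\<Phi> x = \<Psi> x"
  using assms(4) by induction (use assms(1-3) in \<open>simp_all add: alg_morph_H_def\<close>)

lemma alg_morph_H_comp: "alg_morph_H \<Phi> \<Longrightarrow> alg_morph_H \<Psi> \<Longrightarrow> alg_morph_H (\<Psi> \<circ> \<Phi>)"
  by (simp add: alg_morph_H_def)

lemma alg_morph_H_inverse:
  assumes \<Phi>: "alg_morph_H \<Phi>" and \<Psi>: "alg_morph_H \<Psi>"
    and \<Psi>\<Phi>_u: "\<And>n. n \<ge> 1 \<Longrightarrow> \<Psi> (\<Phi> (u n)) = u n"
    and \<Phi>\<Psi>_u: "\<And>n. n \<ge> 1 \<Longrightarrow> \<Phi> (\<Psi> (u n)) = u n"
  shows "bij_betw \<Phi> Hs Hs" and "x \<in> Hs \<Longrightarrow> the_inv_into Hs \<Phi> x = \<Psi> x"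
proof -
  have id: "alg_morph_H id"
    by (simp add: alg_morph_H_def)
  have \<Psi>\<Phi>: "\<Psi> (\<Phi> x) = x" if "x \<in> Hs" for x
    using alg_morph_H_eq_on_Hs[OF alg_morph_H_comp[OF \<Phi> \<Psi>] id] \<Psi>\<Phi>_u that by simp
  have \<Phi>\<Psi>: "\<Phi> (\<Psi> x) = x" if "x \<in> Hs" for x
    using alg_morph_H_eq_on_Hs[OF alg_morph_H_comp[OF \<Psi> \<Phi>] id] \<Phi>\<Psi>_u that by simp
  show bij: "bij_betw \<Phi> Hs Hs"
    using \<Phi> \<Psi> \<Psi>\<Phi> \<Phi>\<Psi> by (intro bij_betw_byWitness[where f'=\<Psi>]) (auto simp: alg_morph_H_def)
  show "the_inv_into Hs \<Phi> x = \<Psi> x" if "x \<in> Hs"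
    using the_inv_into_f_eq[of \<Phi> Hs "\<Psi> x" x] bij_betw_imp_inj_on[OF bij] \<Phi>\<Psi>[OF that] \<Psi> that
    by (simp add: alg_morph_H_def)
qed

lemma alg_morph_H_lin_ext:
  assumes M: "forest_morphism M" and "\<And>n. n \<ge> 1 \<Longrightarrow> lin_ext M (u n) \<in> Hs"
  shows "alg_morph_H (lin_ext M)"
proof -
  have "lin_ext M x \<in> Hs" if "x \<in> Hs" for x
    using that
    by induction (simp_all add: assms lin_ext_fone lin_ext_fadd lin_ext_smul lin_ext_fmul Hs.intros)
  then show ?thesis
    by (simp add: alg_morph_H_def lin_ext_fone[OF M] lin_ext_fadd lin_ext_smul lin_ext_fmul[OF M])
qed

section \<open>Existence of morphisms with prescribed images of the generators\<close>

definition tree_sum :: "nat \<Rightarrow> alg" where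
  "tree_sum k = (\<lambda>F. if length F = 1 \<and> fw F = k then 1 else 0)"

lemma fmul_tree_sum:
  "fmul (tree_sum k) c F = (case F of [] \<Rightarrow> 0 | t # F' \<Rightarrow> if tw t = k then c F' else 0)"
  by (simp add: fmul_single_trees tree_sum_def split: list.split)

lemma u_eq_fsum_tree_sum:
  assumes "n \<ge> 1"
  shows "u n = fsum (\<lambda>k. fmul (tree_sum k) (u (n - k))) {1..n}"
proof
  fix F
  show "u n F = fsum (\<lambda>k. fmul (tree_sum k) (u (n - k))) {1..n} F"
  proof (cases F)
    case (Cons t F')
    have "fsum (\<lambda>k. fmul (tree_sum k) (u (n - k))) {1..n} F
        = (\<Sum>k\<in>{1..n}. if k = tw t then u (n - tw t) F' else 0)"
      unfolding fsum_def fmul_tree_sum Cons by (intro sum.cong) auto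
    also have "\<dots> = u n F"
      using tw_pos[of t] by (auto simp: Cons u_def)
    finally show ?thesis
      by simp
  qed (use assms in \<open>simp add: u_def fsum_def fmul_tree_sum\<close>)
qed

text \<open>To send \<open>u\<^sub>n\<close> to \<open>y\<^sub>n\<close>, the sum \<open>tree_sum k\<close> of all trees of weight \<open>k\<close> must go
  to \<open>v\<^sub>k\<close>, where \<open>y\<^sub>n = \<Sum>\<^sub>k v\<^sub>k y\<^sub>n\<^sub>-\<^sub>k\<close> (with \<open>y\<^sub>0 = 1\<close>) by the previous lemma; this
  recursion determines \<open>v\<close>, and each of the \<open>card (forests_of_weight (k - 1))\<close> trees of
  weight \<open>k\<close> is sent to the same share of \<open>v\<^sub>k\<close>.\<close>

function tree_sum_image :: "(nat \<Rightarrow> alg) \<Rightarrow> nat \<Rightarrow> alg" where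
  "tree_sum_image y n =
     fadd (y n) (smul (-1) (fsum (\<lambda>k. fmul (tree_sum_image y k) (y (n - k))) {1..<n}))"
  by auto
termination
  by (relation "measure snd") auto

declare tree_sum_image.simps [simp del]

definition tree_image :: "(nat \<Rightarrow> alg) \<Rightarrow> ptree \<Rightarrow> alg" where
  "tree_image y t =
     smul (1 / of_nat (card (forests_of_weight (tw t - 1)))) (tree_sum_image y (tw t))"

definition forest_image :: "(nat \<Rightarrow> alg) \<Rightarrow> forest \<Rightarrow> alg" where
  "forest_image y F = foldr (\<lambda>t. fmul (tree_image y t)) F fone"

lemma homogeneous_tree_sum_image:
  assumes "\<And>n. n \<ge> 1 \<Longrightarrow> homogeneous n (y n)" and "n \<ge> 1"
  shows "homogeneous n (tree_sum_image y n)"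
  using assms(2)
proof (induction n rule: less_induct)
  case (less n)
  have parts: "homogeneous n (fmul (tree_sum_image y k) (y (n - k)))" if "k \<in> {1..<n}" for k
  proof -
    have "homogeneous (k + (n - k)) (fmul (tree_sum_image y k) (y (n - k)))"
      using that by (intro homogeneous_fmul less.IH assms(1)) auto
    then show ?thesis
      using that by simp
  qed
  then show ?case
    using less.prems by (subst tree_sum_image.simps)
      (auto intro!: homogeneous_fadd homogeneous_smul homogeneous_fsum assms(1) parts)
qed

lemma forest_morphism_forest_image:
  assumes "\<And>n. n \<ge> 1 \<Longrightarrow> homogeneous n (y n)"
  shows "forest_morphism (forest_image y)"
proof -
  have "homogeneous (fw F) (forest_image y F)" for F
  proof (induction F)
    case Nil
    then show ?case
      by (simp add: forest_image_def homogeneous_fone)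
  next
    case (Cons t F)
    have "1 \<le> tw t"
      using tw_pos[of t] by simp
    then have "homogeneous (tw t) (tree_image y t)"
      unfolding tree_image_def by (intro homogeneous_smul homogeneous_tree_sum_image assms)
    then show ?case
      using homogeneous_fmul[OF _ Cons] by (simp add: forest_image_def)
  qed
  moreover have "forest_image y (F @ G) = fmul (forest_image y F) (forest_image y G)" for F G
    by (induction F) (simp_all add: forest_image_def fmul_assoc)
  ultimately show ?thesis
    by (simp add: forest_morphism_def forest_image_def)
qed

lemma lin_ext_tree_sum:
  assumes hom: "\<And>n. n \<ge> 1 \<Longrightarrow> homogeneous n (y n)" and "k \<ge> 1"
  shows "lin_ext (forest_image y) (tree_sum k) = tree_sum_image y k"
proof
  fix G
  let ?M = "forest_image y"
  have hom_M: "homogeneous (fw F) (?M F)" for F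
    using forest_morphism_forest_image[OF hom] by (simp add: forest_morphism_def)
  have "lin_ext ?M (tree_sum k) G
      = (\<Sum>F\<in>forests_of_weight (fw G). if length F = 1 then (if fw F = k then ?M F G else 0) else 0)"
    unfolding kernel_map_def tree_sum_def by (rule sum.cong) auto
  also have "\<dots> = (if fw G = 0 then 0 else
      \<Sum>ts\<in>forests_of_weight (fw G - 1). if Suc (fw ts) = k then ?M [Node ts] G else 0)"
    using sum_forests_of_weight_single_tree[where n="fw G" and f="\<lambda>F. if fw F = k then ?M F G else 0"]
    by simp
  also have "\<dots> = tree_sum_image y k G"
  proof (cases "fw G = k")
    case True
    let ?N = "card (forests_of_weight (k - 1))"
    have "?N \<noteq> 0"
      using forests_of_weight_nonempty by (simp add: card_eq_0_iff)
    moreover have "(\<Sum>ts\<in>forests_of_weight (k - 1). if Suc (fw ts) = k then ?M [Node ts] G else 0)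
        = (\<Sum>ts\<in>forests_of_weight (k - 1). tree_sum_image y k G / of_nat ?N)"
      using assms(2)
      by (intro sum.cong refl) (auto simp: forests_of_weight_def forest_image_def tree_image_def smul_def)
    ultimately show ?thesis
      using True assms(2) by simp
  next
    case False
    then have "tree_sum_image y k G = 0"
      using homogeneous_tree_sum_image[OF hom assms(2)] by (auto simp: homogeneous_def)
    moreover have "?M [Node ts] G = 0" if "Suc (fw ts) = k" for ts
      using hom_M[of "[Node ts]"] that False by (auto simp: homogeneous_def)
    ultimately show ?thesis
      by (auto intro!: sum.neutral)
  qed
  finally show "lin_ext ?M (tree_sum k) G = tree_sum_image y k G" .
qed

lemma lin_ext_forest_image_u:
  assumes hom: "\<And>n. n \<ge> 1 \<Longrightarrow> homogeneous n (y n)" and "n \<ge> 1"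
  shows "lin_ext (forest_image y) (u n) = y n"
  using assms(2)
proof (induction n rule: less_induct)
  case (less n)
  let ?M = "forest_image y"
  let ?v = "tree_sum_image y"
  have M: "forest_morphism ?M"
    by (rule forest_morphism_forest_image[OF hom])
  have "lin_ext ?M (u n) = fsum (\<lambda>k. fmul (?v k) (lin_ext ?M (u (n - k)))) {1..n}"
    unfolding u_eq_fsum_tree_sum[OF less.prems] lin_ext_fsum lin_ext_fmul[OF M]
    by (rule fsum_cong) (simp_all add: lin_ext_tree_sum[OF hom])
  also have "\<dots> = fadd (fmul (?v n) (lin_ext ?M (u (n - n))))
      (fsum (\<lambda>k. fmul (?v k) (lin_ext ?M (u (n - k)))) {1..<n})"
  proof -
    have "{1..n} = insert n {1..<n}"
      using less.prems by auto
    then show ?thesis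
      by (simp only:) (rule fsum_insert, simp_all)
  qed
  also have "\<dots> = fadd (?v n) (fsum (\<lambda>k. fmul (?v k) (y (n - k))) {1..<n})"
  proof -
    have "fsum (\<lambda>k. fmul (?v k) (lin_ext ?M (u (n - k)))) {1..<n}
        = fsum (\<lambda>k. fmul (?v k) (y (n - k))) {1..<n}"
      using less.IH by (intro fsum_cong) auto
    then show ?thesis
      by (simp add: u_0 lin_ext_fone[OF M])
  qed
  also have "\<dots> = y n"
    by (simp only: tree_sum_image.simps[of y n]) (simp add: fadd_def smul_def fun_eq_iff)
  finally show ?case .
qed

lemma forest_morphism_exists:
  assumes "\<And>n. n \<ge> 1 \<Longrightarrow> y n \<in> Hs" and hom: "\<And>n. n \<ge> 1 \<Longrightarrow> homogeneous n (y n)"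
  shows "\<exists>M. forest_morphism M \<and> alg_morph_H (lin_ext M) \<and> (\<forall>n\<ge>1. lin_ext M (u n) = y n)"
proof (intro exI conjI allI impI)
  show M: "forest_morphism (forest_image y)"
    by (rule forest_morphism_forest_image[OF hom])
  show "lin_ext (forest_image y) (u n) = y n" if "n \<ge> 1" for n
    by (rule lin_ext_forest_image_u[OF hom that])
  then show "alg_morph_H (lin_ext (forest_image y))"
    using assms(1) by (intro alg_morph_H_lin_ext[OF M]) simp
qed

section \<open>The elements \<open>z\<^sub>n\<close> and \<open>w\<^sub>n\<close>\<close>

lemma of_nat_choose_eq_gchoose_neg:
  "of_nat ((i + p) choose i) = (-1) ^ i * ((- of_nat (Suc p) :: 'a :: field_char_0) gchoose i)"
proof -
  have "((- of_nat (Suc p) :: 'a) gchoose i) = (-1) ^ i * (of_nat (i + p) gchoose i)"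
    by (subst gbinomial_negated_upper) (simp add: algebra_simps)
  then show ?thesis
    by (simp add: binomial_gbinomial flip: power_add mult_2)
qed

text \<open>For \<open>a = 0\<close> the truncated subtraction makes \<open>(i + a - 1) choose i\<close> vanish except at
  \<open>i = 0\<close>.\<close>

lemma sum_choose_upper_vandermonde:
  "(\<Sum>i\<le>m. ((i + a - 1) choose i) * ((m - i + b) choose (m - i))) = (m + a + b) choose m"
proof (cases a)
  case 0
  have "(\<Sum>i\<le>m. ((i - 1) choose i) * ((m - i + b) choose (m - i)))
      = (\<Sum>i\<le>m. if i = 0 then (m + b) choose m else 0)"
    by (rule sum.cong) auto
  then show ?thesis
    using 0 by simp
next
  case (Suc p)
  have "(of_nat (\<Sum>i\<le>m. ((i + p) choose i) * ((m - i + b) choose (m - i))) :: rat)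
      = (\<Sum>i\<le>m. (-1) ^ m * (((- of_nat (Suc p)) gchoose i) * ((- of_nat (Suc b)) gchoose (m - i))))"
  proof (unfold of_nat_sum, rule sum.cong[OF refl])
    fix i assume "i \<in> {..m}"
    then have "(-1 :: rat) ^ m = (-1) ^ i * (-1) ^ (m - i)"
      by (simp flip: power_add)
    then show "of_nat (((i + p) choose i) * ((m - i + b) choose (m - i)))
        = (-1) ^ m * (((- of_nat (Suc p)) gchoose i) * ((- of_nat (Suc b)) gchoose (m - i)) :: rat)"
      by (simp add: of_nat_choose_eq_gchoose_neg[of i p] of_nat_choose_eq_gchoose_neg[of "m - i" b])
  qed
  also have "\<dots> = (-1) ^ m * ((- of_nat (Suc p) - of_nat (Suc b)) gchoose m)"
    using gbinomial_Vandermonde[of "- of_nat (Suc p) :: rat" "- of_nat (Suc b)" m]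
    by (simp add: atLeast0AtMost flip: sum_distrib_left)
  also have "\<dots> = of_nat ((m + p + b + 1) choose m)"
    using of_nat_choose_eq_gchoose_neg[of m "p + b + 1", where 'a=rat]
    by (simp add: algebra_simps)
  finally show ?thesis
    using Suc by (simp only: of_nat_eq_iff) simp
qed

definition binom_forests :: "nat \<Rightarrow> nat \<Rightarrow> alg" where
  "binom_forests a s = (\<lambda>G. if fw G = s then of_nat ((length G + a) choose length G) else 0)"

lemma binom_forests_0: "binom_forests 0 s = u s"
  by (simp add: binom_forests_def u_def fun_eq_iff)

lemma binom_forests_1_0: "binom_forests 1 0 = fone"
  by (simp add: binom_forests_def fone_def fun_eq_iff)

lemma homogeneous_binom_forests: "homogeneous s (binom_forests a s)"
  by (simp add: homogeneous_def binom_forests_def)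

lemma binom_forests_convolution:
  "binom_forests (a + b + 1) s = fsum (\<lambda>i. fmul (binom_forests a i) (binom_forests b (s - i))) {..s}"
proof
  fix G :: forest
  let ?m = "length G"
  let ?c = "\<lambda>j. of_nat ((j + a) choose j) * of_nat ((?m - j + b) choose (?m - j)) :: rat"
  have "(\<Sum>i\<le>s. binom_forests a i (take j G) * binom_forests b (s - i) (drop j G))
      = (if fw G = s then ?c j else 0)" if "j \<le> ?m" for j
  proof -
    have "(\<Sum>i\<le>s. binom_forests a i (take j G) * binom_forests b (s - i) (drop j G))
        = (\<Sum>i\<le>s. if i = fw (take j G) then (if fw G = s then ?c j else 0) else 0)"
      using that fw_take_drop[of j G] by (intro sum.cong refl) (auto simp: binom_forests_def min_def)
    also have "\<dots> = (if fw G = s then ?c j else 0)"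
      using fw_take_drop[of j G] by (auto simp: sum.delta)
    finally show ?thesis .
  qed
  then have "fsum (\<lambda>i. fmul (binom_forests a i) (binom_forests b (s - i))) {..s} G
      = (\<Sum>j\<le>?m. if fw G = s then ?c j else 0)"
    by (simp add: fsum_def fmul_def sum.swap[where A="{..s}"])
  also have "\<dots> = binom_forests (a + b + 1) s G"
  proof -
    have "(\<Sum>j\<le>?m. ((j + a) choose j) * ((?m - j + b) choose (?m - j))) = (?m + (a + b + 1)) choose ?m"
      using sum_choose_upper_vandermonde[where m="?m" and a="a + 1" and b=b] by (simp add: add_ac)
    from arg_cong[OF this, of "of_nat :: nat \<Rightarrow> rat"] show ?thesis
      by (simp add: binom_forests_def)
  qed
  finally show "binom_forests (a + b + 1) s G
      = fsum (\<lambda>i. fmul (binom_forests a i) (binom_forests b (s - i))) {..s} G"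
    by simp
qed

lemma Hs_binom_forests: "binom_forests a s \<in> Hs"
proof (induction a arbitrary: s)
  case 0
  then show ?case
    by (simp add: binom_forests_0 Hs_u)
next
  case (Suc a)
  then show ?case
    using binom_forests_convolution[of 0 a s]
    by (auto simp: binom_forests_0 Hs_u intro!: Hs_fsum Hs.mul)
qed

lemma z_eq_binom_forests:
  assumes "n \<ge> 1"
  shows "z n = binom_forests 1 n"
proof -
  have "{..n} = insert 0 (insert n {1..n-1})"
    using assms by auto
  then have "binom_forests 1 n
      = fadd (u n) (fadd (u n) (fsum (\<lambda>i. fmul (u i) (u (n - i))) {1..n-1}))"
    using binom_forests_convolution[of 0 0 n] assms by (simp add: binom_forests_0 fsum_insert u_0)
  then show ?thesis
    by (simp add: z_def fadd_def smul_def fun_eq_iff)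
qed

declare w.simps [simp del]

lemma w_eq:
  "w n = fadd (smul (1/2) (u n)) (smul (-1/2) (fsum (\<lambda>i. fmul (w i) (w (n - i))) {1..<n}))"
  by (subst w.simps) (simp add: fadd_def smul_def fsum_def fun_eq_iff)

lemma Hs_homogeneous_w: "w n \<in> Hs \<and> homogeneous n (w n)"
proof (induction n rule: less_induct)
  case (less n)
  have "homogeneous n (fmul (w i) (w (n - i)))" if "i \<in> {1..<n}" for i
    using that homogeneous_fmul[of i "w i" "n - i" "w (n - i)"] less[of i] less[of "n - i"] by auto
  then have "homogeneous n (fsum (\<lambda>i. fmul (w i) (w (n - i))) {1..<n})"
    by (rule homogeneous_fsum)
  moreover have "fsum (\<lambda>i. fmul (w i) (w (n - i))) {1..<n} \<in> Hs"
    using less by (auto intro!: Hs_fsum Hs.mul)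
  ultimately show ?case
    by (subst (1 2) w_eq) (auto intro!: Hs.intros Hs_u homogeneous_fadd homogeneous_smul homogeneous_u)
qed

lemma alg_morph_H_u:
  assumes \<Phi>: "alg_morph_H \<Phi>" and \<Phi>_u: "\<And>n. n \<ge> 1 \<Longrightarrow> \<Phi> (u n) = z n"
  shows "\<Phi> (u k) = binom_forests 1 k"
proof (cases "k = 0")
  case True
  then show ?thesis
    using alg_morph_H_fone[OF \<Phi>] binom_forests_1_0 by (simp add: u_0)
qed (use \<Phi>_u z_eq_binom_forests in simp)

lemma alg_morph_H_binom_forests:
  assumes \<Phi>: "alg_morph_H \<Phi>" and \<Phi>_u: "\<And>n. n \<ge> 1 \<Longrightarrow> \<Phi> (u n) = z n"
  shows "\<Phi> (binom_forests a s) = binom_forests (2 * a + 1) s"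
proof (induction a arbitrary: s)
  case 0
  show ?case
    using alg_morph_H_u[OF \<Phi> \<Phi>_u] by (simp add: binom_forests_0)
next
  case (Suc a)
  have "\<Phi> (binom_forests (Suc a) s)
      = \<Phi> (fsum (\<lambda>i. fmul (u i) (binom_forests a (s - i))) {..s})"
    using binom_forests_convolution[of 0 a s] by (simp add: binom_forests_0)
  also have "\<dots> = fsum (\<lambda>i. \<Phi> (fmul (u i) (binom_forests a (s - i)))) {..s}"
    by (rule alg_morph_H_fsum[OF \<Phi>]) (simp_all add: Hs.mul Hs_u Hs_binom_forests)
  also have "\<dots> = fsum (\<lambda>i. fmul (binom_forests 1 i) (binom_forests (2 * a + 1) (s - i))) {..s}"
    using Suc.IH by (intro fsum_cong)
      (simp_all add: alg_morph_H_fmul[OF \<Phi>] alg_morph_H_u[OF \<Phi> \<Phi>_u] Hs_u Hs_binom_forests)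
  also have "\<dots> = binom_forests (1 + (2 * a + 1) + 1) s"
    by (rule binom_forests_convolution[symmetric])
  finally show ?case
    by simp
qed

lemma alg_morph_H_w_eq_u:
  assumes \<Phi>: "alg_morph_H \<Phi>" and \<Phi>_u: "\<And>n. n \<ge> 1 \<Longrightarrow> \<Phi> (u n) = z n" and "n \<ge> 1"
  shows "\<Phi> (w n) = u n"
  using assms(3)
proof (induction n rule: less_induct)
  case (less n)
  have Hs_w: "w i \<in> Hs" for i
    using Hs_homogeneous_w by blast
  have "fsum (\<lambda>i. \<Phi> (fmul (w i) (w (n - i)))) {1..<n}
      = fsum (\<lambda>i. fmul (u i) (u (n - i))) {1..n-1}"
    using less.IH by (intro fsum_cong) (auto simp: alg_morph_H_fmul[OF \<Phi>] Hs_w)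
  then have "\<Phi> (w n)
      = fadd (smul (1/2) (z n)) (smul (-1/2) (fsum (\<lambda>i. fmul (u i) (u (n - i))) {1..n-1}))"
    using less.prems
    by (subst w_eq) (simp add: alg_morph_H_fadd[OF \<Phi>] alg_morph_H_smul[OF \<Phi>] alg_morph_H_fsum[OF \<Phi>]
        \<Phi>_u Hs.intros Hs_u Hs_fsum Hs_w)
  then show ?case
    by (simp add: z_def fadd_def smul_def fun_eq_iff add_divide_distrib)
qed

lemma alg_morph_H_z_eq_u:
  assumes \<Psi>: "alg_morph_H \<Psi>" and \<Psi>_u: "\<And>n. n \<ge> 1 \<Longrightarrow> \<Psi> (u n) = w n" and "n \<ge> 1"
  shows "\<Psi> (z n) = u n"
proof -
  have "fsum (\<lambda>k. \<Psi> (fmul (u k) (u (n - k)))) {1..n-1}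
      = fsum (\<lambda>k. fmul (w k) (w (n - k))) {1..<n}"
    using \<Psi>_u by (intro fsum_cong) (auto simp: alg_morph_H_fmul[OF \<Psi>] Hs_u)
  then have "\<Psi> (z n) = fadd (smul 2 (w n)) (fsum (\<lambda>k. fmul (w k) (w (n - k))) {1..<n})"
    using assms(3)
    by (simp add: z_def alg_morph_H_fadd[OF \<Psi>] alg_morph_H_smul[OF \<Psi>] alg_morph_H_fsum[OF \<Psi>]
        \<Psi>_u Hs.intros Hs_u Hs_fsum)
  then show ?thesis
    by (subst (asm) w_eq) (simp add: fadd_def smul_def fun_eq_iff)
qed

definition pair_prod :: "(forest \<times> forest) list \<Rightarrow> (forest \<times> forest) list \<Rightarrow> (forest \<times> forest) list" where
  "pair_prod A B = concat (map (\<lambda>(P, R). map (\<lambda>(P', R'). (P @ P', R @ R')) B) A)"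

definition forest_cuts :: "(ptree \<Rightarrow> (forest \<times> forest) list) \<Rightarrow> forest \<Rightarrow> (forest \<times> forest) list" where
  "forest_cuts k F = map (\<lambda>cs. (concat (map fst cs), concat (map snd cs))) (product_lists (map k F))"

lemma pair_prod_Nil [simp]: "pair_prod [] B = []"
  by (simp add: pair_prod_def)

lemma pair_prod_Cons: "pair_prod ((P, R) # A) B = map (\<lambda>(P', R'). (P @ P', R @ R')) B @ pair_prod A B"
  by (simp add: pair_prod_def)

lemma pair_prod_unit [simp]: "pair_prod [([], [])] B = B"
  by (simp add: pair_prod_def case_prod_unfold)

lemma pair_prod_assoc: "pair_prod (pair_prod A B) C = pair_prod A (pair_prod B C)"
proof -
  have "pair_prod (map (\<lambda>(P', R'). (P @ P', R @ R')) B) C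
      = map (\<lambda>(P', R'). (P @ P', R @ R')) (pair_prod B C)" for P R B
    by (induction B) (auto simp: pair_prod_def)
  then show ?thesis
    by (induction A) (auto simp: pair_prod_Cons pair_prod_def)
qed

lemma forest_cuts_Nil [simp]: "forest_cuts k [] = [([], [])]"
  by (simp add: forest_cuts_def)

lemma forest_cuts_Cons: "forest_cuts k (t # F) = pair_prod (k t) (forest_cuts k F)"
  by (simp add: forest_cuts_def pair_prod_def map_concat comp_def case_prod_unfold)

lemma forest_cuts_append: "forest_cuts k (F @ G) = pair_prod (forest_cuts k F) (forest_cuts k G)"
  by (induction F) (auto simp: forest_cuts_Cons pair_prod_assoc)

lemma forest_cuts_single [simp]: "forest_cuts k [t] = k t"
proof -
  have "pair_prod A [([], [])] = A" for A
    by (induction A) (auto simp: pair_prod_def)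
  then show ?thesis
    by (simp add: forest_cuts_Cons)
qed

lemma cutsF_eq_forest_cuts: "cutsF = forest_cuts cuts"
  by (simp add: cutsF_def forest_cuts_def fun_eq_iff)

lemma fcutsF_eq_forest_cuts: "fcutsF = forest_cuts (fcuts True)"
  by (simp add: fcutsF_def forest_cuts_def fun_eq_iff)

lemma count_prepend_pair:
  "count_list (map (\<lambda>(P', R'). (P @ P', R @ R')) B) (G, H)
     = (\<Sum>(i, j)\<in>{..length G} \<times> {..length H}.
          if take i G = P \<and> take j H = R then count_list B (drop i G, drop j H) else 0)"
proof (cases "take (length P) G = P \<and> take (length R) H = R")
  case True
  then have G: "G = P @ drop (length P) G" and H: "H = R @ drop (length R) H"
    by (metis append_take_drop_id)+
  then have "length P \<le> length G" "length R \<le> length H"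
    by (metis le_add1 length_append)+
  have "inj (\<lambda>(P', R'). (P @ P', R @ R'))"
    by (auto simp: inj_def)
  then have "count_list (map (\<lambda>(P', R'). (P @ P', R @ R')) B) (G, H)
      = count_list B (drop (length P) G, drop (length R) H)"
    using count_list_map_conv[of "\<lambda>(P', R'). (P @ P', R @ R')" B "(drop (length P) G, drop (length R) H)"]
      G H by simp
  also have "\<dots> = (\<Sum>x\<in>{..length G} \<times> {..length H}.
      if x = (length P, length R) then count_list B (drop (fst x) G, drop (snd x) H) else 0)"
    using \<open>length P \<le> length G\<close> \<open>length R \<le> length H\<close> by (simp add: sum.delta')
  also have "\<dots> = (\<Sum>(i, j)\<in>{..length G} \<times> {..length H}.
      if take i G = P \<and> take j H = R then count_list B (drop i G, drop j H) else 0)"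
  proof -
    have "(take i G = P \<and> take j H = R) \<longleftrightarrow> (i, j) = (length P, length R)"
      if "i \<le> length G" "j \<le> length H" for i j
      using True that by (metis length_take min.absorb2 prod.inject)
    with True show ?thesis
      by (intro sum.cong refl) (clarsimp simp: split_beta)
  qed
  finally show ?thesis .
next
  case False
  then have "count_list (map (\<lambda>(P', R'). (P @ P', R @ R')) B) (G, H) = 0"
    by (auto simp: count_list_0_iff)
  moreover have "\<forall>(i, j)\<in>{..length G} \<times> {..length H}. \<not> (take i G = P \<and> take j H = R)"
    using False by auto
  ultimately show ?thesis
    by (simp add: case_prod_unfold) blast
qed

lemma count_pair_prod:
  "count_list (pair_prod A B) (G, H)
     = (\<Sum>(i, j)\<in>{..length G} \<times> {..length H}.
          count_list A (take i G, take j H) * count_list B (drop i G, drop j H))"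
proof (induction A)
  case (Cons a A)
  obtain P R where a: "a = (P, R)"
    by (cases a)
  show ?case
    unfolding a pair_prod_Cons count_list_append count_prepend_pair Cons.IH sum.distrib[symmetric]
    by (intro sum.cong) auto
qed simp

lemma forest_cuts_weight:
  assumes "\<And>t P R. t \<in> set F \<Longrightarrow> (P, R) \<in> set (k t) \<Longrightarrow> fw P + fw R = tw t"
    and "(P, R) \<in> set (forest_cuts k F)"
  shows "fw P + fw R = fw F"
  using assms
proof (induction F arbitrary: P R)
  case (Cons t F)
  from Cons.prems(2) obtain P1 R1 P2 R2 where "(P1, R1) \<in> set (k t)" "(P2, R2) \<in> set (forest_cuts k F)"
    and "P = P1 @ P2" "R = R1 @ R2"
    by (auto simp: forest_cuts_Cons pair_prod_def)
  with Cons.prems(1) Cons.IH[of P2 R2] show ?case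
    by fastforce
qed simp

lemma cuts_Node:
  "cuts (Node ts) = ([Node ts], []) # map (\<lambda>(P, R). (P, [Node R])) (forest_cuts cuts ts)"
  by (simp add: forest_cuts_def comp_def case_prod_unfold)

text \<open>The non-total Frabetti--Brouder cuts of \<open>Node ts\<close>, listed as pairs (pruned forest,
  children of the trunk): the edge to the leftmost child may not be cut.\<close>

definition fr_child_cuts :: "forest \<Rightarrow> (forest \<times> forest) list" where
  "fr_child_cuts ts = (case ts of [] \<Rightarrow> [([], [])]
     | t1 # ts' \<Rightarrow> pair_prod (fcuts False t1) (forest_cuts (fcuts True) ts'))"

lemma fcuts_Node:
  "fcuts b (Node ts) =
     (if b then [([Node ts], [])] else []) @ map (\<lambda>(P, R). (P, [Node R])) (fr_child_cuts ts)"
proof (cases ts)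
  case (Cons t1 ts')
  have "product_lists (fcuts False t1 # map (fcuts True) ts')
      = product_lists (map (\<lambda>x. x) (fcuts False t1 # map (fcuts True) ts'))"
    by simp
  then show ?thesis
    by (simp add: Cons fr_child_cuts_def pair_prod_def forest_cuts_def map_concat comp_def case_prod_unfold)
qed (simp add: fr_child_cuts_def)

lemma fcuts_True: "fcuts True t = ([t], []) # fcuts False t"
  by (cases t) (simp add: fcuts_Node)

lemma cuts_weight: "(P, R) \<in> set (cuts t) \<Longrightarrow> fw P + fw R = tw t"
proof (induction t arbitrary: P R rule: cuts.induct)
  case (1 ts)
  show ?case
  proof (cases "(P, R) = ([Node ts], [])")
    case False
    with "1.prems" obtain R' where "(P, R') \<in> set (forest_cuts cuts ts)" "R = [Node R']"
      unfolding cuts_Node by auto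
    moreover from calculation(1) have "fw P + fw R' = fw ts"
      by (rule forest_cuts_weight[rotated]) (use "1.IH" in auto)
    ultimately show ?thesis
      by simp
  qed simp
qed

lemma fcuts_weight: "(P, R) \<in> set (fcuts b t) \<Longrightarrow> fw P + fw R = tw t"
proof (induction b t arbitrary: P R rule: fcuts.induct)
  case (1 b)
  then show ?case
    by (auto split: if_splits)
next
  case (2 b t1 ts)
  show ?case
  proof (cases "(P, R) = ([Node (t1 # ts)], [])")
    case False
    with "2.prems" obtain R' where "(P, R') \<in> set (fr_child_cuts (t1 # ts))" "R = [Node R']"
      unfolding fcuts_Node by (auto split: if_splits)
    then obtain P1 R1 P2 R2 where "(P1, R1) \<in> set (fcuts False t1)"
      "(P2, R2) \<in> set (forest_cuts (fcuts True) ts)" "P = P1 @ P2" "R = [Node (R1 @ R2)]"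
      by (auto simp: fr_child_cuts_def pair_prod_def)
    moreover from calculation(2) have "fw P2 + fw R2 = fw ts"
      by (rule forest_cuts_weight[rotated]) (use "2.IH" in auto)
    ultimately show ?thesis
      using "2.IH"(1) by fastforce
  qed simp
qed

lemma forest_cuts_cuts_weight: "(P, R) \<in> set (forest_cuts cuts F) \<Longrightarrow> fw P + fw R = fw F"
  by (rule forest_cuts_weight[rotated]) (auto dest: cuts_weight)

lemma forest_cuts_fcuts_weight: "(P, R) \<in> set (forest_cuts (fcuts True) F) \<Longrightarrow> fw P + fw R = fw F"
  by (rule forest_cuts_weight[rotated]) (auto dest: fcuts_weight)

definition cut_cop :: "(forest \<Rightarrow> (forest \<times> forest) list) \<Rightarrow> alg \<Rightarrow> alg2" where
  "cut_cop K = kernel_map (\<lambda>(G, H). fw G + fw H) (\<lambda>F p. of_nat (count_list (K F) p))"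

definition tmul :: "alg2 \<Rightarrow> alg2 \<Rightarrow> alg2" where
  "tmul X Y = (\<lambda>(G, H). \<Sum>(i, j)\<in>{..length G} \<times> {..length H}.
                  X (take i G, take j H) * Y (drop i G, drop j H))"

lemma cut_cop_fadd: "cut_cop K (fadd a b) = (\<lambda>p. cut_cop K a p + cut_cop K b p)"
  by (simp add: cut_cop_def kernel_map_def fadd_def fun_eq_iff sum.distrib distrib_right)

lemma cut_cop_smul: "cut_cop K (smul c a) = (\<lambda>p. c * cut_cop K a p)"
  by (simp add: cut_cop_def kernel_map_def smul_def fun_eq_iff sum_distrib_left mult.assoc)

lemma cut_cop_fone: "cut_cop (forest_cuts k) fone (G, H) = (if G = [] \<and> H = [] then 1 else 0)"
proof -
  have "cut_cop (forest_cuts k) fone (G, H)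
      = (\<Sum>F\<in>forests_of_weight (fw G + fw H).
           if F = [] then of_nat (count_list (forest_cuts k F) (G, H)) else 0)"
    unfolding cut_cop_def kernel_map_def fone_def prod.case by (rule sum.cong) auto
  also have "\<dots> = (if G = [] \<and> H = [] then 1 else 0)"
    by (simp add: sum.delta) (auto simp: forests_of_weight_def)
  finally show ?thesis .
qed

lemma cut_cop_fmul:
  assumes weight: "\<And>F P R. (P, R) \<in> set (forest_cuts k F) \<Longrightarrow> fw P + fw R = fw F"
  shows "cut_cop (forest_cuts k) (fmul a b) = tmul (cut_cop (forest_cuts k) a) (cut_cop (forest_cuts k) b)"
proof (rule ext, clarify)
  fix G H :: forest
  let ?l = "\<lambda>(i, j). (take i G, take j H)" and ?r = "\<lambda>(i, j). (drop i G, drop j H)"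
  have "cut_cop (forest_cuts k) (fmul a b) (G, H)
      = (\<Sum>x\<in>{..length G} \<times> {..length H}.
           cut_cop (forest_cuts k) a (?l x) * cut_cop (forest_cuts k) b (?r x))"
    unfolding cut_cop_def
  proof (rule kernel_map_fmul)
    show "fw F = (case p of (G, H) \<Rightarrow> fw G + fw H)"
      if "of_nat (count_list (forest_cuts k F) p) \<noteq> (0 :: rat)" for F p
      using that weight by (cases p) (auto simp: count_list_0_iff)
    show "of_nat (count_list (forest_cuts k (F1 @ F2)) (G, H))
        = (\<Sum>x\<in>{..length G} \<times> {..length H}.
             of_nat (count_list (forest_cuts k F1) (?l x)) * of_nat (count_list (forest_cuts k F2) (?r x)) :: rat)"
      for F1 F2
      by (simp add: forest_cuts_append count_pair_prod case_prod_unfold)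
    show "(case ?l x of (G, H) \<Rightarrow> fw G + fw H) + (case ?r x of (G, H) \<Rightarrow> fw G + fw H)
        = (case (G, H) of (G, H) \<Rightarrow> fw G + fw H)" for x
      using fw_take_drop[of _ G] fw_take_drop[of _ H] by (cases x) (simp add: algebra_simps)
  qed simp
  then show "cut_cop (forest_cuts k) (fmul a b) (G, H)
      = tmul (cut_cop (forest_cuts k) a) (cut_cop (forest_cuts k) b) (G, H)"
    by (simp add: tmul_def case_prod_unfold)
qed

lemma cut_cop_eq_sum_support:
  assumes "fsupp a" and weight: "\<And>F P R. (P, R) \<in> set (K F) \<Longrightarrow> fw P + fw R = fw F"
  shows "(\<lambda>p. \<Sum>F\<in>{F. a F \<noteq> 0}. a F * of_nat (count_list (K F) p)) = cut_cop K a"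
proof (rule ext, clarify)
  fix G H :: forest
  let ?S = "{F. a F \<noteq> 0}" and ?W = "forests_of_weight (fw G + fw H)"
  have "(\<Sum>F\<in>?S. a F * of_nat (count_list (K F) (G, H)))
      = (\<Sum>F\<in>?S \<inter> ?W. a F * of_nat (count_list (K F) (G, H)))"
    using assms by (intro sum.mono_neutral_right) (auto simp: fsupp_def forests_of_weight_def count_list_0_iff)
  also have "\<dots> = cut_cop K a (G, H)"
    unfolding cut_cop_def kernel_map_def by (intro sum.mono_neutral_left) auto
  finally show "(\<Sum>F\<in>?S. a F * of_nat (count_list (K F) (G, H))) = cut_cop K a (G, H)" .
qed

lemma cop_eq_cut_cop: "fsupp a \<Longrightarrow> cop a = cut_cop (forest_cuts cuts) a"
  unfolding cop_def cutsF_eq_forest_cuts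
  by (rule cut_cop_eq_sum_support) (auto dest: forest_cuts_cuts_weight)

lemma copFr_eq_cut_cop: "fsupp a \<Longrightarrow> copFr a = cut_cop (forest_cuts (fcuts True)) a"
  unfolding copFr_def fcutsF_eq_forest_cuts
  by (rule cut_cop_eq_sum_support) (auto dest: forest_cuts_fcuts_weight)

section \<open>Counting cuts\<close>

text \<open>\<open>cut_cop (forest_cuts k) all_forests (G, H)\<close> is the number of cuts, over all forests
  \<open>F\<close>, whose pruned part is \<open>G\<close> and whose trunk is \<open>H\<close>.\<close>

definition all_forests :: alg where
  "all_forests = (\<lambda>F. 1)"

definition all_trees :: alg where
  "all_trees = (\<lambda>F. if length F = 1 then 1 else 0)"

lemma all_forests_eq: "all_forests = fadd fone (fmul all_trees all_forests)"
  by (simp add: fun_eq_iff fadd_def fone_def fmul_single_trees all_trees_def all_forests_def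
      split: list.split)

lemma count_map_Node:
  "count_list (map (\<lambda>(P, R). (P, [Node R])) L) (G, H)
     = (if length H = 1 then count_list L (G, children (hd H)) else 0)"
proof (cases "length H = 1")
  case True
  then obtain r where H: "H = [Node r]"
    by (metis One_nat_def children.cases length_0_conv length_Suc_conv)
  have "inj (\<lambda>(P, R). (P, [Node R]))"
    by (auto simp: inj_def)
  then show ?thesis
    using count_list_map_conv[of "\<lambda>(P, R). (P, [Node R])" L "(G, r)"] by (simp add: H)
qed (auto simp: count_list_0_iff)

lemma cut_cop_all_trees:
  assumes k_Node: "\<And>ts. k (Node ts) = ([Node ts], []) # map (\<lambda>(P, R). (P, [Node R])) (L ts)"
  shows "cut_cop (forest_cuts k) all_trees (G, H)
    = (if length G = 1 \<and> H = [] then 1 else 0)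
      + (if length H = 1 then cut_cop L all_forests (G, children (hd H)) else 0)"
proof -
  let ?n = "fw G + fw H"
  have "cut_cop (forest_cuts k) all_trees (G, H)
      = (\<Sum>F\<in>forests_of_weight ?n. if length F = 1 then of_nat (count_list (forest_cuts k F) (G, H)) else 0)"
    unfolding cut_cop_def kernel_map_def all_trees_def prod.case by (rule sum.cong) auto
  also have "\<dots> = (if ?n = 0 then 0 else
      \<Sum>ts\<in>forests_of_weight (?n - 1). of_nat (count_list (forest_cuts k [Node ts]) (G, H)))"
    by (rule sum_forests_of_weight_single_tree)
  also have "\<dots> = (if ?n = 0 then 0 else
      (\<Sum>ts\<in>forests_of_weight (?n - 1). if G = [Node ts] \<and> H = [] then 1 else 0) +
      (\<Sum>ts\<in>forests_of_weight (?n - 1).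
         if length H = 1 then of_nat (count_list (L ts) (G, children (hd H))) else 0))"
    by (cases "?n = 0") (auto simp: k_Node count_map_Node sum.distrib[symmetric] intro!: sum.cong)
  also have "\<dots> = (if length G = 1 \<and> H = [] then 1 else 0)
      + (if length H = 1 then cut_cop L all_forests (G, children (hd H)) else 0)"
  proof (cases "?n = 0")
    case False
    have "(\<Sum>ts\<in>forests_of_weight (?n - 1). if G = [Node ts] \<and> H = [] then 1 else 0 :: rat)
        = (if length G = 1 \<and> H = [] then 1 else 0)"
      using sum_forests_of_weight_single_Node[of G] by (cases "H = []") simp_all
    moreover have "(\<Sum>ts\<in>forests_of_weight (?n - 1).
         if length H = 1 then of_nat (count_list (L ts) (G, children (hd H))) else 0)
        = (if length H = 1 then cut_cop L all_forests (G, children (hd H)) else 0)"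
    proof (cases "length H = 1")
      case True
      then obtain r where "H = [Node r]"
        by (metis One_nat_def children.cases length_0_conv length_Suc_conv)
      then show ?thesis
        by (simp add: cut_cop_def kernel_map_def all_forests_def)
    qed simp
    ultimately show ?thesis
      using False by simp
  qed auto
  finally show ?thesis .
qed

lemma cut_cop_all_forests_rec:
  assumes k_Node: "\<And>ts. k (Node ts) = ([Node ts], []) # map (\<lambda>(P, R). (P, [Node R])) (L ts)"
    and weight: "\<And>F P R. (P, R) \<in> set (forest_cuts k F) \<Longrightarrow> fw P + fw R = fw F"
  defines "X \<equiv> cut_cop (forest_cuts k) all_forests" and "Z \<equiv> cut_cop L all_forests"
  shows "X (G, H) = (if G = [] \<and> H = [] then 1 else 0)
     + (if G \<noteq> [] then X (tl G, H) else 0)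
     + (if H \<noteq> [] then (\<Sum>i\<le>length G. Z (take i G, children (hd H)) * X (drop i G, tl H)) else 0)"
proof -
  let ?T = "cut_cop (forest_cuts k) all_trees"
  have "X (G, H) = cut_cop (forest_cuts k) fone (G, H) + tmul ?T X (G, H)"
    unfolding X_def by (subst (1) all_forests_eq) (simp add: cut_cop_fadd cut_cop_fmul[OF weight])
  also have "tmul ?T X (G, H)
     = (\<Sum>(i, j)\<in>{..length G} \<times> {..length H}.
          if (i, j) = (1, 0) \<and> G \<noteq> [] then X (drop i G, drop j H) else 0)
     + (\<Sum>(i, j)\<in>{..length G} \<times> {..length H}.
          if j = 1 \<and> H \<noteq> [] then Z (take i G, children (hd H)) * X (drop i G, drop j H) else 0)"
    unfolding tmul_def prod.case cut_cop_all_trees[OF k_Node] Z_def sum.distrib[symmetric] split_def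
    by (rule sum.cong) (auto simp: min_def take_Suc hd_conv_nth split: if_splits)
  also have "(\<Sum>(i, j)\<in>{..length G} \<times> {..length H}.
      if (i, j) = (1, 0) \<and> G \<noteq> [] then X (drop i G, drop j H) else 0)
      = (if G \<noteq> [] then X (tl G, H) else 0)"
  proof (cases "G = []")
    case False
    then have "(\<Sum>(i, j)\<in>{..length G} \<times> {..length H}.
        if (i, j) = (1, 0) \<and> G \<noteq> [] then X (drop i G, drop j H) else 0)
        = (\<Sum>x\<in>{..length G} \<times> {..length H}.
             if x = (1, 0) then X (drop (fst x) G, drop (snd x) H) else 0)"
      by (intro sum.cong) (auto simp: case_prod_unfold)
    also have "\<dots> = X (tl G, H)"
      using False by (simp add: sum.delta' drop_Suc Suc_le_eq)
    finally show ?thesis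
      using False by simp
  qed simp
  also have "(\<Sum>(i, j)\<in>{..length G} \<times> {..length H}.
      if j = 1 \<and> H \<noteq> [] then Z (take i G, children (hd H)) * X (drop i G, drop j H) else 0)
     = (if H \<noteq> [] then (\<Sum>i\<le>length G. Z (take i G, children (hd H)) * X (drop i G, tl H)) else 0)"
  proof (cases "H = []")
    case False
    then show ?thesis
      unfolding sum.cartesian_product[symmetric]
      by (simp add: sum.delta drop_Suc Suc_le_eq cong: if_cong)
  qed simp
  finally show ?thesis
    by (simp add: cut_cop_fone)
qed

lemma sum_closed_forms_product:
  assumes "c \<ge> 1"
    and Z: "\<And>P. Z (P, r) = of_nat ((length P + c * Suc (fw r) - 2) choose length P)"
    and f: "\<And>P. f (P, H) = of_nat ((length P + c * fw H) choose length P)"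
  shows "(\<Sum>i\<le>length G. Z (take i G, r) * f (drop i G, H))
    = of_nat ((length G + c * fw (Node r # H) - 1) choose length G)"
proof -
  let ?a = "c * Suc (fw r) - 1"
  have "(\<Sum>i\<le>length G. Z (take i G, r) * f (drop i G, H))
      = of_nat (\<Sum>i\<le>length G. ((i + ?a - 1) choose i) * ((length G - i + c * fw H) choose (length G - i)))"
    unfolding of_nat_sum
  proof (rule sum.cong[OF refl])
    fix i assume "i \<in> {..length G}"
    moreover have "i + c * Suc (fw r) - 2 = i + ?a - 1"
      using \<open>c \<ge> 1\<close> by (simp add: Suc_le_eq)
    ultimately show "Z (take i G, r) * f (drop i G, H)
        = of_nat (((i + ?a - 1) choose i) * ((length G - i + c * fw H) choose (length G - i)))"
      by (simp add: Z f min_def)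
  qed
  also have "\<dots> = of_nat ((length G + ?a + c * fw H) choose length G)"
    by (simp only: sum_choose_upper_vandermonde)
  also have "length G + ?a + c * fw H = length G + c * fw (Node r # H) - 1"
    using \<open>c \<ge> 1\<close> by (simp add: algebra_simps)
  finally show ?thesis .
qed

lemma cut_recursion_closed_form:
  fixes f Z :: alg2 and c :: nat
  assumes "c \<ge> 1"
    and rec: "\<And>G H. f (G, H) = (if G = [] \<and> H = [] then 1 else 0)
       + (if G \<noteq> [] then f (tl G, H) else 0)
       + (if H \<noteq> [] then (\<Sum>i\<le>length G. Z (take i G, children (hd H)) * f (drop i G, tl H)) else 0)"
    and Z: "\<And>r P. (\<And>P'. f (P', r) = of_nat ((length P' + c * fw r) choose length P'))
       \<Longrightarrow> Z (P, r) = of_nat ((length P + c * Suc (fw r) - 2) choose length P)"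
  shows "f (G, H) = of_nat ((length G + c * fw H) choose length G)"
proof (induction "fw H" arbitrary: G H rule: less_induct)
  case less
  show ?case
  proof (cases H)
    case Nil
    show ?thesis
      by (induction G) (subst rec, simp add: Nil)+
  next
    case H: (Cons h H')
    obtain r where h: "h = Node r"
      by (cases h)
    have sum_eq: "(\<Sum>i\<le>length G. Z (take i G, r) * f (drop i G, H'))
        = of_nat ((length G + c * fw H - 1) choose length G)" for G
      using sum_closed_forms_product[OF \<open>c \<ge> 1\<close> Z[OF less] less] by (simp add: H h)
    have "c * fw H \<ge> 1"
      using \<open>c \<ge> 1\<close> by (simp add: H h)
    show ?thesis
    proof (induction G)
      case Nil
      show ?case
        using sum_eq[of "[]"] by (subst rec) (simp add: H h)
    next
      case (Cons g G')
      have "f (g # G', H)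
          = f (G', H) + (\<Sum>i\<le>length (g # G'). Z (take i (g # G'), r) * f (drop i (g # G'), H'))"
        by (subst rec) (simp add: H h del: sum.atMost_Suc)
      then show ?case
        using Cons.IH sum_eq[of "g # G'"] \<open>c * fw H \<ge> 1\<close> by simp
    qed
  qed
qed

lemma cut_cop_cuts_all_forests:
  "cut_cop (forest_cuts cuts) all_forests (G, H) = of_nat ((length G + 2 * fw H) choose length G)"
proof (rule cut_recursion_closed_form[where c = 2])
  show "cut_cop (forest_cuts cuts) all_forests (G, H) = (if G = [] \<and> H = [] then 1 else 0)
      + (if G \<noteq> [] then cut_cop (forest_cuts cuts) all_forests (tl G, H) else 0)
      + (if H \<noteq> [] then (\<Sum>i\<le>length G. cut_cop (forest_cuts cuts) all_forests (take i G, children (hd H))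
           * cut_cop (forest_cuts cuts) all_forests (drop i G, tl H)) else 0)" for G H
    by (rule cut_cop_all_forests_rec[OF cuts_Node forest_cuts_cuts_weight])
qed simp_all

lemma count_forest_cuts_fcuts:
  "count_list (forest_cuts (fcuts True) F) (G, H) = count_list (fr_child_cuts F) (G, H)
     + (if F \<noteq> [] \<and> G \<noteq> [] \<and> hd G = hd F
        then count_list (forest_cuts (fcuts True) (tl F)) (tl G, H) else 0)"
proof (cases F)
  case (Cons t F')
  have "inj (\<lambda>(P', R'). (t # P', R'))"
    by (auto simp: inj_def)
  then have "count_list (map (\<lambda>(P', R'). (t # P', R')) (forest_cuts (fcuts True) F')) (G, H)
      = (if G \<noteq> [] \<and> hd G = t then count_list (forest_cuts (fcuts True) F') (tl G, H) else 0)"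
    using count_list_map_conv[of "\<lambda>(P', R'). (t # P', R')" _ "(tl G, H)"]
    by (cases G) (auto simp: count_list_0_iff)
  moreover have "forest_cuts (fcuts True) F
      = map (\<lambda>(P', R'). (t # P', R')) (forest_cuts (fcuts True) F') @ fr_child_cuts F"
    by (simp add: Cons forest_cuts_Cons fcuts_True pair_prod_Cons fr_child_cuts_def)
  ultimately show ?thesis
    by (simp add: Cons)
qed (simp add: fr_child_cuts_def)

lemma cut_cop_fr_child_cuts:
  "cut_cop fr_child_cuts all_forests (G, H) = cut_cop (forest_cuts (fcuts True)) all_forests (G, H)
     - (if G \<noteq> [] then cut_cop (forest_cuts (fcuts True)) all_forests (tl G, H) else 0)"
proof -
  let ?n = "fw G + fw H"
  let ?head = "\<lambda>F. of_nat (if F \<noteq> [] \<and> G \<noteq> [] \<and> hd G = hd F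
      then count_list (forest_cuts (fcuts True) (tl F)) (tl G, H) else 0) :: rat"
  have "cut_cop (forest_cuts (fcuts True)) all_forests (G, H)
      = cut_cop fr_child_cuts all_forests (G, H) + (\<Sum>F\<in>forests_of_weight ?n. ?head F)"
    unfolding cut_cop_def kernel_map_def all_forests_def prod.case
    by (simp add: count_forest_cuts_fcuts sum.distrib)
  also have "(\<Sum>F\<in>forests_of_weight ?n. ?head F)
      = (if G \<noteq> [] then cut_cop (forest_cuts (fcuts True)) all_forests (tl G, H) else 0)"
  proof (cases G)
    case (Cons g G')
    have "(\<Sum>F\<in>forests_of_weight ?n. ?head F) = (\<Sum>F\<in>forests_of_weight ?n.
        if F \<noteq> [] \<and> hd F = g then of_nat (count_list (forest_cuts (fcuts True) (tl F)) (G', H)) else 0)"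
      by (rule sum.cong) (auto simp: Cons)
    also have "\<dots> = (\<Sum>F\<in>forests_of_weight (?n - tw g).
        of_nat (count_list (forest_cuts (fcuts True) F) (G', H)))"
      by (rule sum_forests_of_weight_head) (simp add: Cons)
    finally show ?thesis
      by (simp add: Cons cut_cop_def kernel_map_def all_forests_def)
  qed simp
  finally show ?thesis
    by simp
qed

lemma cut_cop_fcuts_all_forests:
  "cut_cop (forest_cuts (fcuts True)) all_forests (G, H) = of_nat ((length G + fw H) choose length G)"
proof -
  have "cut_cop (forest_cuts (fcuts True)) all_forests (G, H) = of_nat ((length G + 1 * fw H) choose length G)"
  proof (rule cut_recursion_closed_form[where c = 1])
  show "cut_cop (forest_cuts (fcuts True)) all_forests (G, H) = (if G = [] \<and> H = [] then 1 else 0)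
      + (if G \<noteq> [] then cut_cop (forest_cuts (fcuts True)) all_forests (tl G, H) else 0)
      + (if H \<noteq> [] then (\<Sum>i\<le>length G. cut_cop fr_child_cuts all_forests (take i G, children (hd H))
           * cut_cop (forest_cuts (fcuts True)) all_forests (drop i G, tl H)) else 0)" for G H
    using fcuts_Node[of True] by (intro cut_cop_all_forests_rec forest_cuts_fcuts_weight) simp_all
  show "cut_cop fr_child_cuts all_forests (P, r) = of_nat ((length P + 1 * Suc (fw r) - 2) choose length P)"
    if closed: "\<And>P'. cut_cop (forest_cuts (fcuts True)) all_forests (P', r)
                  = of_nat ((length P' + 1 * fw r) choose length P')" for r P
  proof (cases P)
    case (Cons p P')
    have "Suc (length P' + fw r) choose Suc (length P')
        = (length P' + fw r choose length P') + (length P' + fw r choose Suc (length P'))"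
      by simp
    then show ?thesis
      by (simp add: cut_cop_fr_child_cuts closed Cons)
  qed (simp add: cut_cop_fr_child_cuts closed)
  qed simp
  then show ?thesis
    by simp
qed

section \<open>Coproducts of the generators\<close>

definition tensor :: "alg \<Rightarrow> alg \<Rightarrow> alg2" where
  "tensor a b = (\<lambda>(G, H). a G * b H)"

lemma tens_sum_Nil: "tens_sum [] = (\<lambda>p. 0)"
  by (simp add: tens_sum_def fun_eq_iff)

lemma tens_sum_Cons: "tens_sum ((a, b) # ps) = (\<lambda>p. tensor a b p + tens_sum ps p)"
  by (simp add: tens_sum_def tensor_def fun_eq_iff)

lemma tens_sum_append: "tens_sum (ps @ qs) = (\<lambda>p. tens_sum ps p + tens_sum qs p)"
  by (simp add: tens_sum_def fun_eq_iff)

lemma tens_sum_smul: "tens_sum (map (\<lambda>(a, b). (smul c a, b)) ps) = (\<lambda>p. c * tens_sum ps p)"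
  by (induction ps) (auto simp: tens_sum_def smul_def fun_eq_iff algebra_simps)

lemma tens_sum_upt:
  "tens_sum (map f [0..<Suc n]) (G, H) = (\<Sum>k\<le>n. fst (f k) G * snd (f k) H)"
proof -
  have "tens_sum (map f [0..<Suc n]) (G, H) = sum_list (map (\<lambda>k. fst (f k) G * snd (f k) H) [0..<Suc n])"
    by (simp add: tens_sum_def case_prod_unfold comp_def)
  also have "\<dots> = (\<Sum>k\<in>set [0..<Suc n]. fst (f k) G * snd (f k) H)"
    by (rule sum_set_upt_conv_sum_list_nat[symmetric])
  also have "set [0..<Suc n] = {..n}"
    by auto
  finally show ?thesis .
qed

definition tens_prod :: "(alg \<times> alg) list \<Rightarrow> (alg \<times> alg) list \<Rightarrow> (alg \<times> alg) list" where
  "tens_prod ps qs = concat (map (\<lambda>(a1, b1). map (\<lambda>(a2, b2). (fmul a1 a2, fmul b1 b2)) qs) ps)"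

lemma tmul_tens_sum: "tmul (tens_sum ps) (tens_sum qs) = tens_sum (tens_prod ps qs)"
proof -
  have tmul_add_left: "tmul (\<lambda>p. X p + Y p) W = (\<lambda>p. tmul X W p + tmul Y W p)"
    and tmul_add_right: "tmul W (\<lambda>p. X p + Y p) = (\<lambda>p. tmul W X p + tmul W Y p)" for X Y W
    by (simp_all add: tmul_def fun_eq_iff case_prod_unfold sum.distrib distrib_left distrib_right)
  have tmul_zero_left: "tmul (\<lambda>p. 0) W = (\<lambda>p. 0)" and tmul_zero_right: "tmul W (\<lambda>p. 0) = (\<lambda>p. 0)"
    for W
    by (simp_all add: tmul_def fun_eq_iff case_prod_unfold)
  have tmul_tensor: "tmul (tensor a1 b1) (tensor a2 b2) = tensor (fmul a1 a2) (fmul b1 b2)"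
    for a1 b1 a2 b2
    by (simp add: tmul_def tensor_def fmul_def fun_eq_iff sum_product sum.cartesian_product mult_ac)
  have tmul_tensor_sum:
    "tmul (tensor a b) (tens_sum qs) = tens_sum (map (\<lambda>(a', b'). (fmul a a', fmul b b')) qs)" for a b
  proof (induction qs)
    case (Cons q qs)
    obtain a' b' where "q = (a', b')"
      by (cases q)
    with Cons.IH show ?case
      by (simp add: tens_sum_Cons tmul_add_right tmul_tensor)
  qed (simp add: tens_sum_Nil tmul_zero_right)
  show ?thesis
  proof (induction ps)
    case (Cons p ps)
    obtain a b where "p = (a, b)"
      by (cases p)
    with Cons.IH show ?case
      by (simp add: tens_prod_def tens_sum_Cons tens_sum_append tmul_add_left tmul_tensor_sum)
  qed (simp add: tens_sum_Nil tens_prod_def tmul_zero_left)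
qed

lemma tens_prod_map:
  assumes "\<And>a b. a \<in> A \<Longrightarrow> b \<in> A \<Longrightarrow> \<Phi> (fmul a b) = fmul (\<Phi> a) (\<Phi> b)"
    and "set ps \<subseteq> A \<times> A" "set qs \<subseteq> A \<times> A"
  shows "map (\<lambda>(a, b). (\<Phi> a, \<Phi> b)) (tens_prod ps qs)
    = tens_prod (map (\<lambda>(a, b). (\<Phi> a, \<Phi> b)) ps) (map (\<lambda>(a, b). (\<Phi> a, \<Phi> b)) qs)"
  using assms(2)
proof (induction ps)
  case (Cons p ps)
  obtain a b where p: "p = (a, b)"
    by (cases p)
  have "map (\<lambda>(a', b'). (\<Phi> (fmul a a'), \<Phi> (fmul b b'))) qs
      = map (\<lambda>(a', b'). (fmul (\<Phi> a) (\<Phi> a'), fmul (\<Phi> b) (\<Phi> b'))) qs"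
    using assms(1,3) Cons.prems by (auto simp: p intro!: map_cong)
  with Cons show ?case
    by (simp add: tens_prod_def p comp_def case_prod_unfold)
qed (simp add: tens_prod_def)

lemma sum_weight_split:
  "(\<Sum>k\<le>n. (if fw G = n - k then A k else 0) * (if fw H = k then B k else 0))
     = (if fw G + fw H = n then A (fw H) * B (fw H) else (0 :: rat))"
proof -
  have "(\<Sum>k\<le>n. (if fw G = n - k then A k else 0) * (if fw H = k then B k else 0))
      = (\<Sum>k\<le>n. if k = fw H then (if fw G = n - k then A k * B k else 0) else 0)"
    by (rule sum.cong) auto
  then show ?thesis
    by (auto simp: sum.delta)
qed

lemma cut_cop_restrict:
  "cut_cop K (\<lambda>F. if fw F = n then a F else 0) (G, H)
     = (if fw G + fw H = n then cut_cop K a (G, H) else 0)"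
  by (auto simp: cut_cop_def kernel_map_def forests_of_weight_def intro!: sum.neutral)

lemma copFr_u: "copFr (u n) = tens_sum (map (\<lambda>k. (binom_forests k (n - k), u k)) [0..<Suc n])"
proof (rule ext, clarify)
  fix G H :: forest
  have "u n = (\<lambda>F. if fw F = n then all_forests F else 0)"
    by (simp add: u_def all_forests_def fun_eq_iff)
  then have "copFr (u n) (G, H) = (if fw G + fw H = n then of_nat ((length G + fw H) choose length G) else 0)"
    unfolding copFr_eq_cut_cop[OF fsupp_Hs[OF Hs_u]]
    by (simp only: cut_cop_restrict cut_cop_fcuts_all_forests)
  also have "\<dots> = tens_sum (map (\<lambda>k. (binom_forests k (n - k), u k)) [0..<Suc n]) (G, H)"
    unfolding tens_sum_upt by (simp add: binom_forests_def u_def sum_weight_split)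
  finally show "copFr (u n) (G, H) = \<dots>" .
qed

lemma tmul_cut_cop_cuts_all_forests:
  "tmul (cut_cop (forest_cuts cuts) all_forests) (cut_cop (forest_cuts cuts) all_forests) (G, H)
     = of_nat ((length G + (2 * fw H + 1)) choose length G) * of_nat ((length H + 1) choose length H)"
proof -
  let ?X = "cut_cop (forest_cuts cuts) all_forests"
  have "(\<Sum>i\<le>length G. ?X (take i G, take j H) * ?X (drop i G, drop j H))
      = of_nat ((length G + (2 * fw H + 1)) choose length G)" for j
  proof -
    have "2 * fw H = 2 * fw (take j H) + 2 * fw (drop j H)"
      using fw_take_drop[of j H] by simp
    then have "(\<Sum>i\<le>length G. ((i + 2 * fw (take j H)) choose i)
          * ((length G - i + 2 * fw (drop j H)) choose (length G - i)))
        = (length G + (2 * fw H + 1)) choose length G"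
      using sum_choose_upper_vandermonde[where m="length G" and a="2 * fw (take j H) + 1"
          and b="2 * fw (drop j H)"]
      by (simp add: add_ac)
    moreover have "(\<Sum>i\<le>length G. ?X (take i G, take j H) * ?X (drop i G, drop j H))
        = (\<Sum>i\<le>length G. of_nat (((i + 2 * fw (take j H)) choose i)
            * ((length G - i + 2 * fw (drop j H)) choose (length G - i))))"
      by (intro sum.cong refl) (simp add: cut_cop_cuts_all_forests min_def)
    ultimately show ?thesis
      by (simp only: of_nat_sum[symmetric])
  qed
  then show ?thesis
    by (simp add: tmul_def sum.cartesian_product[symmetric] sum.swap[where A="{..length G}"])
qed

lemma cop_binom_forests_1:
  "cop (binom_forests 1 n)
     = tens_sum (map (\<lambda>k. (binom_forests (2 * k + 1) (n - k), binom_forests 1 k)) [0..<Suc n])"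
proof (rule ext, clarify)
  fix G H :: forest
  let ?X = "cut_cop (forest_cuts cuts) all_forests"
  have "binom_forests 1 n = (\<lambda>F. if fw F = n then fmul all_forests all_forests F else 0)"
    by (simp add: binom_forests_def fmul_def all_forests_def fun_eq_iff)
  then have "cop (binom_forests 1 n) (G, H) = (if fw G + fw H = n then tmul ?X ?X (G, H) else 0)"
    unfolding cop_eq_cut_cop[OF fsupp_Hs[OF Hs_binom_forests]]
    by (simp only: cut_cop_restrict cut_cop_fmul[OF forest_cuts_cuts_weight])
  also have "\<dots> = tens_sum (map (\<lambda>k. (binom_forests (2 * k + 1) (n - k), binom_forests 1 k))
      [0..<Suc n]) (G, H)"
    unfolding tens_sum_upt binom_forests_def tmul_cut_cop_cuts_all_forests
    by (simp only: sum_weight_split list.map fst_conv snd_conv)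
  finally show "cop (binom_forests 1 n) (G, H) = \<dots>" .
qed

lemma
  assumes "a \<in> Hs"
  shows cop_smul: "cop (smul c a) = (\<lambda>p. c * cop a p)"
    and copFr_smul: "copFr (smul c a) = (\<lambda>p. c * copFr a p)"
  using assms by (simp_all add: cop_eq_cut_cop copFr_eq_cut_cop fsupp_Hs Hs.intros cut_cop_smul)

lemma
  assumes "a \<in> Hs" "b \<in> Hs"
  shows cop_fadd: "cop (fadd a b) = (\<lambda>p. cop a p + cop b p)"
    and cop_fmul: "cop (fmul a b) = tmul (cop a) (cop b)"
    and copFr_fadd: "copFr (fadd a b) = (\<lambda>p. copFr a p + copFr b p)"
    and copFr_fmul: "copFr (fmul a b) = tmul (copFr a) (copFr b)"
  using assms
  by (simp_all add: cop_eq_cut_cop copFr_eq_cut_cop fsupp_Hs Hs.intros cut_cop_fadd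
      cut_cop_fmul forest_cuts_cuts_weight forest_cuts_fcuts_weight)

lemma cop_fone: "cop fone = tens_sum [(fone, fone)]" and copFr_fone: "copFr fone = tens_sum [(fone, fone)]"
proof -
  have "tens_sum [(fone, fone)] = cut_cop (forest_cuts k) fone" for k
  proof (rule ext, clarify)
    fix G H
    show "tens_sum [(fone, fone)] (G, H) = cut_cop (forest_cuts k) fone (G, H)"
      by (simp add: tens_sum_def cut_cop_fone) (simp add: fone_def)
  qed
  then show "cop fone = tens_sum [(fone, fone)]" "copFr fone = tens_sum [(fone, fone)]"
    by (simp_all add: cop_eq_cut_cop copFr_eq_cut_cop fsupp_Hs Hs.one)
qed

definition intertwines :: "(alg \<Rightarrow> alg) \<Rightarrow> alg \<Rightarrow> bool" where
  "intertwines \<Phi> x \<longleftrightarrow> (\<exists>ps. set ps \<subseteq> Hs \<times> Hs \<and> copFr x = tens_sum ps \<and>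
     cop (\<Phi> x) = tens_sum (map (\<lambda>(a, b). (\<Phi> a, \<Phi> b)) ps))"

lemma intertwines_u:
  assumes \<Phi>: "alg_morph_H \<Phi>" and \<Phi>_u: "\<And>n. n \<ge> 1 \<Longrightarrow> \<Phi> (u n) = z n"
  shows "intertwines \<Phi> (u n)"
proof -
  let ?ps = "map (\<lambda>k. (binom_forests k (n - k), u k)) [0..<Suc n]"
  have "map (\<lambda>(a, b). (\<Phi> a, \<Phi> b)) ?ps
      = map (\<lambda>k. (binom_forests (2 * k + 1) (n - k), binom_forests 1 k)) [0..<Suc n]"
    by (simp add: alg_morph_H_binom_forests[OF \<Phi> \<Phi>_u] alg_morph_H_u[OF \<Phi> \<Phi>_u] del: upt_Suc)
  then have "cop (\<Phi> (u n)) = tens_sum (map (\<lambda>(a, b). (\<Phi> a, \<Phi> b)) ?ps)"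
    by (simp only: alg_morph_H_u[OF \<Phi> \<Phi>_u] cop_binom_forests_1)
  then show ?thesis
    unfolding intertwines_def by (intro exI[of _ ?ps]) (auto simp: copFr_u Hs_binom_forests Hs_u)
qed

lemma intertwines_fone: "alg_morph_H \<Phi> \<Longrightarrow> intertwines \<Phi> fone"
  unfolding intertwines_def
  by (intro exI[of _ "[(fone, fone)]"]) (simp add: cop_fone copFr_fone alg_morph_H_fone Hs.one)

lemma intertwines_fadd:
  assumes \<Phi>: "alg_morph_H \<Phi>" and "a \<in> Hs" "b \<in> Hs" "intertwines \<Phi> a" "intertwines \<Phi> b"
  shows "intertwines \<Phi> (fadd a b)"
proof -
  obtain psa psb where
    "set psa \<subseteq> Hs \<times> Hs" "copFr a = tens_sum psa"
    "cop (\<Phi> a) = tens_sum (map (\<lambda>(a, b). (\<Phi> a, \<Phi> b)) psa)"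
    "set psb \<subseteq> Hs \<times> Hs" "copFr b = tens_sum psb"
    "cop (\<Phi> b) = tens_sum (map (\<lambda>(a, b). (\<Phi> a, \<Phi> b)) psb)"
    using assms(4,5) unfolding intertwines_def by blast
  with assms(2,3) show ?thesis
    unfolding intertwines_def
    by (intro exI[of _ "psa @ psb"])
       (simp add: copFr_fadd cop_fadd alg_morph_H_fadd[OF \<Phi>] alg_morph_H_Hs[OF \<Phi>] tens_sum_append)
qed

lemma intertwines_smul:
  assumes \<Phi>: "alg_morph_H \<Phi>" and "a \<in> Hs" "intertwines \<Phi> a"
  shows "intertwines \<Phi> (smul c a)"
proof -
  obtain ps where ps: "set ps \<subseteq> Hs \<times> Hs" "copFr a = tens_sum ps"
    "cop (\<Phi> a) = tens_sum (map (\<lambda>(a, b). (\<Phi> a, \<Phi> b)) ps)"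
    using assms(3) unfolding intertwines_def by blast
  let ?cps = "map (\<lambda>(a, b). (smul c a, b)) ps"
  have "map (\<lambda>(a, b). (\<Phi> a, \<Phi> b)) ?cps
      = map (\<lambda>(a, b). (smul c a, b)) (map (\<lambda>(a, b). (\<Phi> a, \<Phi> b)) ps)"
    using ps(1) by (auto simp: alg_morph_H_smul[OF \<Phi>])
  then have "cop (\<Phi> (smul c a)) = tens_sum (map (\<lambda>(a, b). (\<Phi> a, \<Phi> b)) ?cps)"
    by (simp only: alg_morph_H_smul[OF \<Phi> \<open>a \<in> Hs\<close>] cop_smul[OF alg_morph_H_Hs[OF \<Phi> \<open>a \<in> Hs\<close>]]
        ps(3) tens_sum_smul)
  moreover have "set ?cps \<subseteq> Hs \<times> Hs"
    using ps(1) by (auto intro: Hs.smul)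
  ultimately show ?thesis
    unfolding intertwines_def using \<open>a \<in> Hs\<close> ps(2)
    by (intro exI[of _ ?cps]) (simp add: copFr_smul tens_sum_smul)
qed

lemma intertwines_fmul:
  assumes \<Phi>: "alg_morph_H \<Phi>" and "a \<in> Hs" "b \<in> Hs" "intertwines \<Phi> a" "intertwines \<Phi> b"
  shows "intertwines \<Phi> (fmul a b)"
proof -
  obtain psa psb where
    "set psa \<subseteq> Hs \<times> Hs" "copFr a = tens_sum psa"
    "cop (\<Phi> a) = tens_sum (map (\<lambda>(a, b). (\<Phi> a, \<Phi> b)) psa)"
    "set psb \<subseteq> Hs \<times> Hs" "copFr b = tens_sum psb"
    "cop (\<Phi> b) = tens_sum (map (\<lambda>(a, b). (\<Phi> a, \<Phi> b)) psb)"
    using assms(4,5) unfolding intertwines_def by blast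
  moreover have "set (tens_prod psa psb) \<subseteq> Hs \<times> Hs"
    using calculation(1,4) by (auto simp: tens_prod_def intro!: Hs.mul)
  ultimately show ?thesis
    unfolding intertwines_def using assms(2,3)
    by (intro exI[of _ "tens_prod psa psb"])
       (simp add: copFr_fmul cop_fmul alg_morph_H_fmul[OF \<Phi>] alg_morph_H_Hs[OF \<Phi>] tmul_tens_sum
        tens_prod_map[where A=Hs, OF alg_morph_H_fmul[OF \<Phi>]])
qed

lemma intertwines_Hs:
  assumes "alg_morph_H \<Phi>" and "\<And>n. n \<ge> 1 \<Longrightarrow> \<Phi> (u n) = z n" and "x \<in> Hs"
  shows "intertwines \<Phi> x"
  using \<open>x \<in> Hs\<close>
  by induction (simp_all add: assms intertwines_u intertwines_fone intertwines_fadd intertwines_smul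
      intertwines_fmul)

lemma forest_morphism_z_exists:
  "\<exists>M. forest_morphism M \<and> alg_morph_H (lin_ext M) \<and> (\<forall>n\<ge>1. lin_ext M (u n) = z n)"
  using forest_morphism_exists[of z] Hs_binom_forests homogeneous_binom_forests
  by (auto simp: z_eq_binom_forests)

lemma forest_morphism_w_exists:
  "\<exists>M. forest_morphism M \<and> alg_morph_H (lin_ext M) \<and> (\<forall>n\<ge>1. lin_ext M (u n) = w n)"
  using forest_morphism_exists[of w] Hs_homogeneous_w by blast

lemma
  assumes \<Phi>: "alg_morph_H \<Phi>" and \<Phi>_u: "\<And>n. n \<ge> 1 \<Longrightarrow> \<Phi> (u n) = z n"
  shows alg_morph_H_z_bij: "bij_betw \<Phi> Hs Hs"
    and alg_morph_H_z_inverse: "n \<ge> 1 \<Longrightarrow> the_inv_into Hs \<Phi> (u n) = w n"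
    and alg_morph_H_z_homogeneous: "x \<in> Hs \<Longrightarrow> homogeneous n x \<Longrightarrow> homogeneous n (\<Phi> x)"
    and alg_morph_H_z_counit: "x \<in> Hs \<Longrightarrow> counit (\<Phi> x) = counit x"
proof -
  obtain M where M: "forest_morphism M" "alg_morph_H (lin_ext M)" "\<forall>n\<ge>1. lin_ext M (u n) = z n"
    using forest_morphism_z_exists by blast
  obtain N where N: "alg_morph_H (lin_ext N)" "\<forall>n\<ge>1. lin_ext N (u n) = w n"
    using forest_morphism_w_exists by blast
  have \<Phi>_M: "\<Phi> x = lin_ext M x" if "x \<in> Hs" for x
    using alg_morph_H_eq_on_Hs[OF \<Phi> M(2) _ that] \<Phi>_u M(3) by simp
  have \<Phi>_N: "\<Phi> (lin_ext N (u n)) = u n" and N_\<Phi>: "lin_ext N (\<Phi> (u n)) = u n" if "n \<ge> 1" for n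
    using alg_morph_H_w_eq_u[OF \<Phi> \<Phi>_u] alg_morph_H_z_eq_u[OF N(1)] \<Phi>_u N(2) that by simp_all
  show "bij_betw \<Phi> Hs Hs"
    by (rule alg_morph_H_inverse(1)[OF \<Phi> N(1) N_\<Phi> \<Phi>_N])
  show "the_inv_into Hs \<Phi> (u n) = w n" if "n \<ge> 1"
    using alg_morph_H_inverse(2)[OF \<Phi> N(1) N_\<Phi> \<Phi>_N Hs_u] N(2) that by simp
  show "homogeneous n (\<Phi> x)" if "x \<in> Hs" "homogeneous n x"
    using \<Phi>_M homogeneous_lin_ext that by simp
  show "counit (\<Phi> x) = counit x" if "x \<in> Hs"
    using \<Phi>_M lin_ext_counit[OF M(1)] that by simp
qed

theorem mainTheorem10:
  shows "(\<exists>\<Phi>. alg_morph_H \<Phi> \<and> (\<forall>n\<ge>1. \<Phi> (u n) = z n)) \<and>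
    (\<forall>\<Phi>. alg_morph_H \<Phi> \<and> (\<forall>n\<ge>1. \<Phi> (u n) = z n) \<longrightarrow>
       bij_betw \<Phi> Hs Hs \<and>
       (\<forall>x\<in>Hs. \<forall>n. homogeneous n x \<longrightarrow> homogeneous n (\<Phi> x)) \<and>
       (\<forall>x\<in>Hs. counit (\<Phi> x) = counit x) \<and>
       (\<forall>x\<in>Hs. \<exists>ps. set ps \<subseteq> Hs \<times> Hs \<and> copFr x = tens_sum ps \<and>
                    cop (\<Phi> x) = tens_sum (map (\<lambda>(a, b). (\<Phi> a, \<Phi> b)) ps)) \<and>
       (\<forall>n\<ge>1. the_inv_into Hs \<Phi> (u n) = w n))"
proof (intro conjI allI impI ballI)
  show "\<exists>\<Phi>. alg_morph_H \<Phi> \<and> (\<forall>n\<ge>1. \<Phi> (u n) = z n)"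
    using forest_morphism_z_exists by blast
  fix \<Phi> assume "alg_morph_H \<Phi> \<and> (\<forall>n\<ge>1. \<Phi> (u n) = z n)"
  then have \<Phi>: "alg_morph_H \<Phi>" and \<Phi>_u: "\<And>n. n \<ge> 1 \<Longrightarrow> \<Phi> (u n) = z n"
    by simp_all
  show "bij_betw \<Phi> Hs Hs"
    by (rule alg_morph_H_z_bij[OF \<Phi> \<Phi>_u])
  show "homogeneous n (\<Phi> x)" if "x \<in> Hs" "homogeneous n x" for x n
    by (rule alg_morph_H_z_homogeneous[OF \<Phi> \<Phi>_u that])
  show "counit (\<Phi> x) = counit x" if "x \<in> Hs" for x
    by (rule alg_morph_H_z_counit[OF \<Phi> \<Phi>_u that])
  show "\<exists>ps. set ps \<subseteq> Hs \<times> Hs \<and> copFr x = tens_sum ps \<and>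
      cop (\<Phi> x) = tens_sum (map (\<lambda>(a, b). (\<Phi> a, \<Phi> b)) ps)" if "x \<in> Hs" for x
    using intertwines_Hs[OF \<Phi> \<Phi>_u that] by (simp add: intertwines_def)
  show "the_inv_into Hs \<Phi> (u n) = w n" if "n \<ge> 1" for n
    by (rule alg_morph_H_z_inverse[OF \<Phi> \<Phi>_u that])
qed

end
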